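(* For any $p,p'>0$ and any separable complex Hilbert space $\mathcal{H}$, $\mathbf{C}^{(2)}_p(\mathcal{H})=\mathbf{C}^{(2)}_{p'}(\mathcal{H})$.
   Context: Observables are self-adjoint operators on $\mathcal{H}$. For an operator $A$ on $\mathcal{H}$, $A^T$ is the operator on the dual $\mathcal{H}^*$ with $(A^T\eta)(\varphi)=\eta(A\varphi)$. For a finite collection $\mathcal{A}=\{A_1,\dots,A_K\}$ of observables and $0<p<\infty$, $C_{\mathcal{A},p}=\sum_{k=1}^K|A_k\otimes I^T-I\otimes A_k^T|^p$ on $\mathcal{H}\otimes\mathcal{H}^*$. For $k\in\mathbb{N}$, $\mathbf{C}^{(k)}_p(\mathcal{H})=\{C_{\mathcal{A},p}:\ \mathcal{A}\text{ a finite collection of observables on }\mathcal{H}\text{ with }\#\mathrm{spec}(A)\le k\text{ for all }A\in\mathcal{A}\}$. *)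

theory Defs
  imports "HOL-Analysis.Analysis"
begin

text \<open>Concrete model: a separable complex Hilbert space is (up to unitary equivalence)
  l2(I) for a countable index set I (here I is a set of naturals; finite I gives
  finite dimension).  H tensor H* is modelled as l2(I x I) via the basis
  e_i tensor e_j^*, where e_j^* is the dual basis functional phi maps to phi_j.
  Operators on l2(J) are functions on J-indexed families that vanish outside l2(J).\<close>

definition l2 :: "'j set \<Rightarrow> ('j \<Rightarrow> complex) set" where
  "l2 J = {f. (\<forall>j. j \<notin> J \<longrightarrow> f j = 0) \<and> (\<lambda>j. (cmod (f j))^2) summable_on J}"

definition l2norm :: "'j set \<Rightarrow> ('j \<Rightarrow> complex) \<Rightarrow> real" where
  "l2norm J f = sqrt (infsum (\<lambda>j. (cmod (f j))^2) J)"

definition l2inner :: "'j set \<Rightarrow> ('j \<Rightarrow> complex) \<Rightarrow> ('j \<Rightarrow> complex) \<Rightarrow> complex" where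
  "l2inner J f g = infsum (\<lambda>j. cnj (f j) * g j) J"

definition is_bop :: "'j set \<Rightarrow> (('j \<Rightarrow> complex) \<Rightarrow> ('j \<Rightarrow> complex)) \<Rightarrow> bool" where
  "is_bop J A \<longleftrightarrow>
     (\<forall>f. f \<notin> l2 J \<longrightarrow> A f = (\<lambda>j. 0)) \<and>
     (\<forall>f\<in>l2 J. A f \<in> l2 J) \<and>
     (\<forall>f\<in>l2 J. \<forall>g\<in>l2 J. A (\<lambda>j. f j + g j) = (\<lambda>j. A f j + A g j)) \<and>
     (\<forall>f\<in>l2 J. \<forall>c. A (\<lambda>j. c * f j) = (\<lambda>j. c * A f j)) \<and>
     (\<exists>C. \<forall>f\<in>l2 J. l2norm J (A f) \<le> C * l2norm J f)"

definition idop :: "'j set \<Rightarrow> ('j \<Rightarrow> complex) \<Rightarrow> ('j \<Rightarrow> complex)" where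
  "idop J = (\<lambda>f. if f \<in> l2 J then f else (\<lambda>j. 0))"

definition observable :: "'j set \<Rightarrow> (('j \<Rightarrow> complex) \<Rightarrow> ('j \<Rightarrow> complex)) \<Rightarrow> bool" where
  "observable J A \<longleftrightarrow> is_bop J A \<and>
     (\<forall>f\<in>l2 J. \<forall>g\<in>l2 J. l2inner J (A f) g = l2inner J f (A g))"

definition spectrum :: "'j set \<Rightarrow> (('j \<Rightarrow> complex) \<Rightarrow> ('j \<Rightarrow> complex)) \<Rightarrow> complex set" where
  "spectrum J A = {z. \<not> (\<exists>B. is_bop J B \<and>
      (\<forall>f\<in>l2 J. B (\<lambda>j. A f j - z * f j) = f \<and> (\<lambda>j. A (B f) j - z * B f j) = f))}"

definition specR :: "'j set \<Rightarrow> (('j \<Rightarrow> complex) \<Rightarrow> ('j \<Rightarrow> complex)) \<Rightarrow> real set" where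
  "specR J A = Re ` spectrum J A"

text \<open>Functional calculus for self-adjoint operators with finite spectrum:
  h(X) = sum over spectral values lam of h(lam) E_lam, with the spectral projection
  E_lam = prod over mu in spec - {lam} of (X - mu)/(lam - mu) (Lagrange interpolation).\<close>
definition proj_factor :: "'j set \<Rightarrow> (('j \<Rightarrow> complex) \<Rightarrow> ('j \<Rightarrow> complex)) \<Rightarrow> real \<Rightarrow> real
    \<Rightarrow> ('j \<Rightarrow> complex) \<Rightarrow> ('j \<Rightarrow> complex)" where
  "proj_factor J X lam mu = (\<lambda>f. if f \<in> l2 J then
      (\<lambda>j. (X f j - complex_of_real mu * f j) / complex_of_real (lam - mu)) else (\<lambda>j. 0))"

definition spectral_proj :: "'j set \<Rightarrow> (('j \<Rightarrow> complex) \<Rightarrow> ('j \<Rightarrow> complex)) \<Rightarrow> real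
    \<Rightarrow> ('j \<Rightarrow> complex) \<Rightarrow> ('j \<Rightarrow> complex)" where
  "spectral_proj J X lam =
     foldr (\<lambda>mu T. proj_factor J X lam mu \<circ> T) (sorted_list_of_set (specR J X - {lam})) (idop J)"

definition fcalc :: "'j set \<Rightarrow> (real \<Rightarrow> real) \<Rightarrow> (('j \<Rightarrow> complex) \<Rightarrow> ('j \<Rightarrow> complex))
    \<Rightarrow> ('j \<Rightarrow> complex) \<Rightarrow> ('j \<Rightarrow> complex)" where
  "fcalc J h X = (\<lambda>f j. \<Sum>lam\<in>specR J X. complex_of_real (h lam) * spectral_proj J X lam f j)"

definition abs_pow :: "'j set \<Rightarrow> real \<Rightarrow> (('j \<Rightarrow> complex) \<Rightarrow> ('j \<Rightarrow> complex))
    \<Rightarrow> ('j \<Rightarrow> complex) \<Rightarrow> ('j \<Rightarrow> complex)" where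
  "abs_pow J p X = fcalc J (\<lambda>x. \<bar>x\<bar> powr p) X"

definition basis_vec :: "nat \<Rightarrow> nat \<Rightarrow> complex" where
  "basis_vec k = (\<lambda>i. if i = k then 1 else 0)"

text \<open>A tensor I^T - I tensor A^T on l2(I x I):
  ((A tensor I) psi)(i,j) = (A psi(-,j))(i), and
  ((I tensor A^T) psi)(i,j) = sum_k psi(i,k) (A e_j)_k, since (A^T eta)_j = eta(A e_j).\<close>
definition Delta :: "nat set \<Rightarrow> ((nat \<Rightarrow> complex) \<Rightarrow> (nat \<Rightarrow> complex))
    \<Rightarrow> (nat \<times> nat \<Rightarrow> complex) \<Rightarrow> (nat \<times> nat \<Rightarrow> complex)" where
  "Delta I A = (\<lambda>\<psi>. if \<psi> \<in> l2 (I \<times> I) then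
      (\<lambda>(i, j). A (\<lambda>i'. \<psi> (i', j)) i - infsum (\<lambda>k. \<psi> (i, k) * A (basis_vec j) k) I)
    else (\<lambda>x. 0))"

definition Cop :: "nat set \<Rightarrow> ((nat \<Rightarrow> complex) \<Rightarrow> (nat \<Rightarrow> complex)) list \<Rightarrow> real
    \<Rightarrow> (nat \<times> nat \<Rightarrow> complex) \<Rightarrow> (nat \<times> nat \<Rightarrow> complex)" where
  "Cop I As p = (\<lambda>\<psi> x. sum_list (map (\<lambda>A. abs_pow (I \<times> I) p (Delta I A) \<psi> x) As))"

definition Cclass :: "nat set \<Rightarrow> nat \<Rightarrow> real
    \<Rightarrow> ((nat \<times> nat \<Rightarrow> complex) \<Rightarrow> (nat \<times> nat \<Rightarrow> complex)) set" where
  "Cclass I k p = {Cop I As p | As. \<forall>A\<in>set As.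
      observable I A \<and> finite (spectrum I A) \<and> card (spectrum I A) \<le> k}"

end

theory Submission
  imports Defs
begin

text \<open>Rescaling an observable \<open>A\<close> by \<open>t > 0\<close> rescales \<open>D\<^sub>A = A \<otimes> I - I \<otimes> A\<^sup>T\<close>, and hence its
  spectrum, by \<open>t\<close>. If \<open>A\<close> has at most two spectral values \<open>\<alpha>, \<beta>\<close>, then \<open>(A - \<alpha>)(A - \<beta>) = 0\<close>
  (a self-adjoint operator with spectrum \<open>{0}\<close> vanishes), so \<open>A \<otimes> I\<close> and \<open>I \<otimes> A\<^sup>T\<close> are commuting
  roots of the same quadratic and \<open>D\<^sub>A\<^sup>3 = (\<alpha> - \<beta>)\<^sup>2 D\<^sub>A\<close>. Thus the spectrum of \<open>D\<^sub>A\<close> lies in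
  \<open>{0, \<plusminus>c}\<close>, on which \<open>\<bar>x\<bar> powr p = \<bar>t x\<bar> powr p'\<close> for a suitable \<open>t\<close>; so
  \<open>\<bar>D\<^sub>A\<bar> powr p = \<bar>D\<^sub>t\<^sub>A\<bar> powr p'\<close> summand by summand.\<close>

definition l2normsq :: "'j set \<Rightarrow> ('j \<Rightarrow> complex) \<Rightarrow> real" where
  "l2normsq J f = infsum (\<lambda>j. (cmod (f j))^2) J"

lemma l2I: "(\<And>j. j \<notin> J \<Longrightarrow> f j = 0) \<Longrightarrow> (\<lambda>j. (cmod (f j))^2) summable_on J \<Longrightarrow> f \<in> l2 J"
  by (simp add: l2_def)

lemma l2D: "f \<in> l2 J \<Longrightarrow> (\<lambda>j. (cmod (f j))^2) summable_on J"
  by (simp add: l2_def)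

lemma l2_outside: "f \<in> l2 J \<Longrightarrow> j \<notin> J \<Longrightarrow> f j = 0"
  by (simp add: l2_def)

lemma l2_zero [simp]: "(\<lambda>j. 0) \<in> l2 J"
  by (simp add: l2_def)

lemma l2_cnj: "f \<in> l2 J \<Longrightarrow> (\<lambda>j. cnj (f j)) \<in> l2 J"
  by (simp add: l2_def)

lemma cmod_add_sq_le: "(cmod (a + b))^2 \<le> 2 * (cmod a)^2 + 2 * (cmod b)^2"
proof -
  have "(cmod (a + b))^2 \<le> (cmod a + cmod b)^2"
    by (simp add: norm_triangle_ineq power_mono)
  also have "\<dots> \<le> 2 * (cmod a)^2 + 2 * (cmod b)^2"
    using zero_le_power2[of "cmod a - cmod b"] by (simp add: power2_eq_square algebra_simps)
  finally show ?thesis .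
qed

lemma cmod_mult_le_sq_add: "cmod (a * b) \<le> (cmod a)^2 + (cmod b)^2"
proof -
  have "2 * (cmod a * cmod b) \<le> (cmod a)^2 + (cmod b)^2"
    using zero_le_power2[of "cmod a - cmod b"] by (simp add: power2_eq_square algebra_simps)
  then show ?thesis
    unfolding norm_mult using mult_nonneg_nonneg[OF norm_ge_zero norm_ge_zero, of a b] by linarith
qed

lemma l2_add:
  assumes "f \<in> l2 J" and "g \<in> l2 J"
  shows "(\<lambda>j. f j + g j) \<in> l2 J"
proof (rule l2I)
  show "\<And>j. j \<notin> J \<Longrightarrow> f j + g j = 0" using assms by (simp add: l2_outside)
  have "(\<lambda>j. 2 * (cmod (f j))^2 + 2 * (cmod (g j))^2) summable_on J"
    by (intro summable_on_add summable_on_cmult_right l2D assms)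
  then show "(\<lambda>j. (cmod (f j + g j))^2) summable_on J"
    by (rule summable_on_comparison_test) (simp_all add: cmod_add_sq_le)
qed

lemma l2_cmult: "f \<in> l2 J \<Longrightarrow> (\<lambda>j. c * f j) \<in> l2 J"
  unfolding l2_def by (simp add: norm_mult power_mult_distrib summable_on_cmult_right)

lemma l2_diff: "f \<in> l2 J \<Longrightarrow> g \<in> l2 J \<Longrightarrow> (\<lambda>j. f j - g j) \<in> l2 J"
  using l2_add[OF _ l2_cmult, of f J g "-1"] by simp

lemma l2_cmult_iff: "c \<noteq> 0 \<Longrightarrow> (\<lambda>j. c * f j) \<in> l2 J \<longleftrightarrow> f \<in> l2 J"
  using l2_cmult[of "\<lambda>j. c * f j" J "1 / c"] l2_cmult[of f J c] by auto

lemma l2_mult_summable: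
  assumes "f \<in> l2 J" and "g \<in> l2 J"
  shows "(\<lambda>j. f j * g j) summable_on J"
proof (rule abs_summable_summable)
  have "(\<lambda>j. (cmod (f j))^2 + (cmod (g j))^2) summable_on J"
    by (intro summable_on_add l2D assms)
  from Infinite_Sum.abs_summable_on_comparison_test'[OF this cmod_mult_le_sq_add]
  show "(\<lambda>j. norm (f j * g j)) summable_on J" by simp
qed

lemma l2_inner_summable: "f \<in> l2 J \<Longrightarrow> g \<in> l2 J \<Longrightarrow> (\<lambda>j. cnj (f j) * g j) summable_on J"
  by (intro l2_mult_summable l2_cnj)

lemma l2normsq_nonneg: "l2normsq J f \<ge> 0"
  unfolding l2normsq_def by (rule infsum_nonneg) simp

lemma l2norm_eq_sqrt: "l2norm J f = sqrt (l2normsq J f)"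
  unfolding l2norm_def l2normsq_def ..

lemma l2norm_nonneg: "l2norm J f \<ge> 0"
  by (simp add: l2norm_eq_sqrt l2normsq_nonneg)

lemma l2norm_zero [simp]: "l2norm J (\<lambda>j. 0) = 0"
  by (simp add: l2norm_def)

lemma l2norm_power2: "(l2norm J f)^2 = l2normsq J f"
  by (simp add: l2norm_eq_sqrt l2normsq_nonneg)

lemma l2normsq_cmult: "l2normsq J (\<lambda>j. c * f j) = (cmod c)^2 * l2normsq J f"
  unfolding l2normsq_def by (simp add: norm_mult power_mult_distrib infsum_cmult_right')

lemma l2norm_cmult: "l2norm J (\<lambda>j. c * f j) = cmod c * l2norm J f"
  by (simp add: l2norm_eq_sqrt l2normsq_cmult real_sqrt_mult)

lemma l2normsq_add_le:
  assumes "f \<in> l2 J" and "g \<in> l2 J"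
  shows "l2normsq J (\<lambda>j. f j + g j) \<le> 2 * l2normsq J f + 2 * l2normsq J g"
proof -
  have "l2normsq J (\<lambda>j. f j + g j) \<le> infsum (\<lambda>j. 2 * (cmod (f j))^2 + 2 * (cmod (g j))^2) J"
    unfolding l2normsq_def
    by (intro infsum_mono l2D l2_add assms summable_on_add summable_on_cmult_right cmod_add_sq_le)
  also have "\<dots> = 2 * l2normsq J f + 2 * l2normsq J g"
    unfolding l2normsq_def
    by (simp add: infsum_add summable_on_cmult_right l2D assms infsum_cmult_right')
  finally show ?thesis .
qed

lemma l2norm_pos:
  assumes f: "f \<in> l2 J" and "f \<noteq> (\<lambda>j. 0)"
  shows "l2norm J f > 0"
proof -
  obtain j where fj: "f j \<noteq> 0" using assms(2) by blast
  have "l2normsq J f \<noteq> 0"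
  proof
    assume "l2normsq J f = 0"
    then have "(cmod (f j))^2 = 0" if "j \<in> J"
      using l2D[OF f] that by (intro nonneg_infsum_le_0D[where A = J]) (auto simp: l2normsq_def)
    with fj l2_outside[OF f] show False by (cases "j \<in> J") auto
  qed
  then show ?thesis using l2normsq_nonneg[of J f] by (simp add: l2norm_eq_sqrt)
qed

lemma l2inner_add_left:
  "f \<in> l2 J \<Longrightarrow> g \<in> l2 J \<Longrightarrow> h \<in> l2 J \<Longrightarrow>
    l2inner J (\<lambda>j. f j + g j) h = l2inner J f h + l2inner J g h"
  unfolding l2inner_def by (simp add: distrib_right infsum_add l2_inner_summable)

lemma l2inner_add_right:
  "f \<in> l2 J \<Longrightarrow> g \<in> l2 J \<Longrightarrow> h \<in> l2 J \<Longrightarrow>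
    l2inner J f (\<lambda>j. g j + h j) = l2inner J f g + l2inner J f h"
  unfolding l2inner_def by (simp add: distrib_left infsum_add l2_inner_summable)

lemma l2inner_cmult_left: "l2inner J (\<lambda>j. c * f j) g = cnj c * l2inner J f g"
  unfolding l2inner_def by (simp add: mult.assoc infsum_cmult_right')

lemma l2inner_cmult_right: "l2inner J f (\<lambda>j. c * g j) = c * l2inner J f g"
  unfolding l2inner_def by (simp add: mult.left_commute infsum_cmult_right')

lemma l2inner_commute: "l2inner J g f = cnj (l2inner J f g)"
  unfolding l2inner_def infsum_cnj[symmetric] by (simp add: mult.commute)

lemma l2inner_diff_left:
  "f \<in> l2 J \<Longrightarrow> g \<in> l2 J \<Longrightarrow> h \<in> l2 J \<Longrightarrow>
    l2inner J (\<lambda>j. f j - g j) h = l2inner J f h - l2inner J g h"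
  using l2inner_add_left[OF _ l2_cmult, of f J g h "-1"] l2inner_cmult_left[of J "-1" g h] by simp

lemma l2inner_self:
  assumes "f \<in> l2 J"
  shows "l2inner J f f = complex_of_real (l2normsq J f)"
proof -
  have "l2inner J f f = infsum (\<lambda>j. complex_of_real ((cmod (f j))^2)) J"
    unfolding l2inner_def
    by (intro infsum_cong) (metis complex_norm_square mult.commute)
  also have "\<dots> = complex_of_real (l2normsq J f)"
    unfolding l2normsq_def
    by (rule infsumI, subst has_sum_of_real_iff, rule has_sum_infsum, rule l2D, fact)
  finally show ?thesis .
qed

lemma l2normsq_add:
  assumes f: "f \<in> l2 J" and g: "g \<in> l2 J"
  shows "l2normsq J (\<lambda>j. f j + g j) = l2normsq J f + l2normsq J g + 2 * Re (l2inner J f g)"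
proof -
  have sq: "(\<lambda>j. (cmod (f j))^2) summable_on J" "(\<lambda>j. (cmod (g j))^2) summable_on J"
    using f g by (auto intro: l2D)
  have re: "(\<lambda>j. 2 * Re (cnj (f j) * g j)) summable_on J"
    by (intro summable_on_cmult_right summable_on_Re l2_inner_summable f g)
  have "(cmod (f j + g j))^2 = ((cmod (f j))^2 + (cmod (g j))^2) + 2 * Re (cnj (f j) * g j)" for j
    unfolding cmod_power2 by (simp add: power2_eq_square algebra_simps)
  then have "l2normsq J (\<lambda>j. f j + g j)
      = infsum (\<lambda>j. ((cmod (f j))^2 + (cmod (g j))^2) + 2 * Re (cnj (f j) * g j)) J"
    unfolding l2normsq_def by presburger
  also have "\<dots> = infsum (\<lambda>j. (cmod (f j))^2 + (cmod (g j))^2) J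
      + infsum (\<lambda>j. 2 * Re (cnj (f j) * g j)) J"
    by (intro infsum_add summable_on_add sq re)
  also have "infsum (\<lambda>j. (cmod (f j))^2 + (cmod (g j))^2) J = l2normsq J f + l2normsq J g"
    unfolding l2normsq_def by (intro infsum_add sq)
  also have "infsum (\<lambda>j. 2 * Re (cnj (f j) * g j)) J = 2 * Re (l2inner J f g)"
    unfolding l2inner_def
    by (subst infsum_cmult_right', subst infsum_Re[OF l2_inner_summable[OF f g]]) (rule refl)
  finally show ?thesis .
qed

lemma l2normsq_diff:
  assumes f: "f \<in> l2 J" and g: "g \<in> l2 J"
  shows "l2normsq J (\<lambda>j. f j - g j) = l2normsq J f + l2normsq J g - 2 * Re (l2inner J f g)"
  using l2normsq_add[OF f l2_cmult[OF g, of "-1"]] l2normsq_cmult[of J "-1" g]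
    l2inner_cmult_right[of J f "-1" g]
  by simp

lemma bop_l2: "is_bop J A \<Longrightarrow> f \<in> l2 J \<Longrightarrow> A f \<in> l2 J"
  by (simp add: is_bop_def)

lemma bop_outside: "is_bop J A \<Longrightarrow> f \<notin> l2 J \<Longrightarrow> A f = (\<lambda>j. 0)"
  by (simp add: is_bop_def)

lemma bop_add:
  "is_bop J A \<Longrightarrow> f \<in> l2 J \<Longrightarrow> g \<in> l2 J \<Longrightarrow> A (\<lambda>j. f j + g j) = (\<lambda>j. A f j + A g j)"
  by (simp add: is_bop_def)

lemma bop_cmult: "is_bop J A \<Longrightarrow> f \<in> l2 J \<Longrightarrow> A (\<lambda>j. c * f j) = (\<lambda>j. c * A f j)"
  by (simp add: is_bop_def)

lemma bop_zero: "is_bop J A \<Longrightarrow> A (\<lambda>j. 0) = (\<lambda>j. 0)"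
  using bop_cmult[of J A "\<lambda>j. 0" 0] by simp

lemma bop_diff:
  "is_bop J A \<Longrightarrow> f \<in> l2 J \<Longrightarrow> g \<in> l2 J \<Longrightarrow> A (\<lambda>j. f j - g j) = (\<lambda>j. A f j - A g j)"
  using bop_add[of J A f "\<lambda>j. (-1) * g j"] bop_cmult[of J A g "-1"] l2_cmult[of g J "-1"] by simp

lemma bop_lincomb:
  "is_bop J A \<Longrightarrow> f \<in> l2 J \<Longrightarrow> g \<in> l2 J \<Longrightarrow>
    A (\<lambda>j. a * f j + b * g j) = (\<lambda>j. a * A f j + b * A g j)"
  using bop_add[of J A "\<lambda>j. a * f j" "\<lambda>j. b * g j"] bop_cmult[of J A f a] bop_cmult[of J A g b]
    l2_cmult[of f J a] l2_cmult[of g J b]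
  by simp

lemma bop_boundE:
  assumes "is_bop J A"
  obtains C where "C \<ge> 0" "\<And>f. f \<in> l2 J \<Longrightarrow> l2norm J (A f) \<le> C * l2norm J f"
proof -
  obtain C where C: "\<forall>f\<in>l2 J. l2norm J (A f) \<le> C * l2norm J f"
    using assms by (auto simp: is_bop_def)
  have "l2norm J (A f) \<le> max C 0 * l2norm J f" if "f \<in> l2 J" for f
  proof -
    have "l2norm J (A f) \<le> C * l2norm J f" using C that by blast
    also have "\<dots> \<le> max C 0 * l2norm J f" by (intro mult_right_mono l2norm_nonneg) simp
    finally show ?thesis .
  qed
  then show ?thesis using that[of "max C 0"] by simp
qed

lemma bop_normsq_boundE:
  assumes "is_bop J A"
  obtains C where "C \<ge> 0" "\<And>f. f \<in> l2 J \<Longrightarrow> l2normsq J (A f) \<le> C * l2normsq J f"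
proof -
  obtain C where "C \<ge> 0" and C: "\<And>f. f \<in> l2 J \<Longrightarrow> l2norm J (A f) \<le> C * l2norm J f"
    using bop_boundE[OF assms] by blast
  have "l2normsq J (A f) \<le> C^2 * l2normsq J f" if "f \<in> l2 J" for f
  proof -
    have "(l2norm J (A f))^2 \<le> (C * l2norm J f)^2"
      by (rule power_mono[OF C[OF that] l2norm_nonneg])
    then show ?thesis by (simp add: l2norm_power2 power_mult_distrib)
  qed
  then show ?thesis using that[of "C^2"] by simp
qed

lemma is_bopI:
  assumes "\<And>f. f \<notin> l2 J \<Longrightarrow> A f = (\<lambda>j. 0)"
    and "\<And>f. f \<in> l2 J \<Longrightarrow> A f \<in> l2 J"
    and "\<And>f g. f \<in> l2 J \<Longrightarrow> g \<in> l2 J \<Longrightarrow> A (\<lambda>j. f j + g j) = (\<lambda>j. A f j + A g j)"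
    and "\<And>f c. f \<in> l2 J \<Longrightarrow> A (\<lambda>j. c * f j) = (\<lambda>j. c * A f j)"
    and "C \<ge> 0" and bound: "\<And>f. f \<in> l2 J \<Longrightarrow> l2normsq J (A f) \<le> C * l2normsq J f"
  shows "is_bop J A"
proof -
  have "l2norm J (A f) \<le> sqrt C * l2norm J f" if "f \<in> l2 J" for f
    using bound[OF that] by (simp add: l2norm_eq_sqrt real_sqrt_mult[symmetric])
  then show ?thesis using assms(1-4) unfolding is_bop_def by blast
qed

lemma is_bop_idop: "is_bop J (idop J)"
  by (rule is_bopI[where C = 1]) (auto simp: idop_def l2_add l2_cmult)

lemma is_bop_plus:
  assumes A: "is_bop J A" and B: "is_bop J B"
  shows "is_bop J (\<lambda>f j. A f j + B f j)"
proof -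
  obtain C1 where "C1 \<ge> 0" and C1: "\<And>f. f \<in> l2 J \<Longrightarrow> l2normsq J (A f) \<le> C1 * l2normsq J f"
    using bop_normsq_boundE[OF A] by blast
  obtain C2 where "C2 \<ge> 0" and C2: "\<And>f. f \<in> l2 J \<Longrightarrow> l2normsq J (B f) \<le> C2 * l2normsq J f"
    using bop_normsq_boundE[OF B] by blast
  show ?thesis
  proof (rule is_bopI[where C = "2 * C1 + 2 * C2"])
    fix f assume "f \<notin> l2 J"
    then show "(\<lambda>j. A f j + B f j) = (\<lambda>j. 0)" by (simp add: bop_outside[OF A] bop_outside[OF B])
  next
    fix f assume "f \<in> l2 J"
    then show "(\<lambda>j. A f j + B f j) \<in> l2 J" by (intro l2_add bop_l2[OF A] bop_l2[OF B])
  next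
    fix f g assume "f \<in> l2 J" "g \<in> l2 J"
    then show "(\<lambda>j. A (\<lambda>j. f j + g j) j + B (\<lambda>j. f j + g j) j)
        = (\<lambda>j. (A f j + B f j) + (A g j + B g j))"
      by (simp add: bop_add[OF A] bop_add[OF B] algebra_simps)
  next
    fix f c assume "f \<in> l2 J"
    then show "(\<lambda>j. A (\<lambda>j. c * f j) j + B (\<lambda>j. c * f j) j) = (\<lambda>j. c * (A f j + B f j))"
      by (simp add: bop_cmult[OF A] bop_cmult[OF B] distrib_left)
  next
    show "2 * C1 + 2 * C2 \<ge> 0" using \<open>C1 \<ge> 0\<close> \<open>C2 \<ge> 0\<close> by simp
  next
    fix f assume f: "f \<in> l2 J"
    have "l2normsq J (\<lambda>j. A f j + B f j) \<le> 2 * l2normsq J (A f) + 2 * l2normsq J (B f)"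
      by (intro l2normsq_add_le bop_l2[OF A] bop_l2[OF B] f)
    then show "l2normsq J (\<lambda>j. A f j + B f j) \<le> (2 * C1 + 2 * C2) * l2normsq J f"
      using C1[OF f] C2[OF f] by (simp add: algebra_simps)
  qed
qed

lemma is_bop_cmult:
  assumes A: "is_bop J A"
  shows "is_bop J (\<lambda>f j. c * A f j)"
proof -
  obtain C where "C \<ge> 0" and C: "\<And>f. f \<in> l2 J \<Longrightarrow> l2normsq J (A f) \<le> C * l2normsq J f"
    using bop_normsq_boundE[OF A] by blast
  show ?thesis
  proof (rule is_bopI[where C = "(cmod c)^2 * C"])
    show "l2normsq J (\<lambda>j. c * A f j) \<le> (cmod c)^2 * C * l2normsq J f" if "f \<in> l2 J" for f
      using mult_left_mono[OF C[OF that], of "(cmod c)^2"] by (simp add: l2normsq_cmult mult.assoc)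
  qed (use \<open>C \<ge> 0\<close> in \<open>auto simp: bop_outside[OF A] bop_l2[OF A] l2_cmult bop_add[OF A]
      bop_cmult[OF A] algebra_simps\<close>)
qed

lemma is_bop_minus: "is_bop J A \<Longrightarrow> is_bop J B \<Longrightarrow> is_bop J (\<lambda>f j. A f j - B f j)"
  using is_bop_plus[OF _ is_bop_cmult, of J A B "-1"] by simp

lemma is_bop_comp:
  assumes A: "is_bop J A" and B: "is_bop J B"
  shows "is_bop J (\<lambda>f. A (B f))"
proof -
  obtain C1 where "C1 \<ge> 0" and C1: "\<And>f. f \<in> l2 J \<Longrightarrow> l2normsq J (A f) \<le> C1 * l2normsq J f"
    using bop_normsq_boundE[OF A] by blast
  obtain C2 where "C2 \<ge> 0" and C2: "\<And>f. f \<in> l2 J \<Longrightarrow> l2normsq J (B f) \<le> C2 * l2normsq J f"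
    using bop_normsq_boundE[OF B] by blast
  show ?thesis
  proof (rule is_bopI[where C = "C1 * C2"])
    show "l2normsq J (A (B f)) \<le> C1 * C2 * l2normsq J f" if "f \<in> l2 J" for f
      using C1[OF bop_l2[OF B that]] mult_left_mono[OF C2[OF that] \<open>C1 \<ge> 0\<close>]
      by (simp add: mult.assoc)
  qed (use \<open>C1 \<ge> 0\<close> \<open>C2 \<ge> 0\<close> in \<open>auto simp: bop_outside[OF B] bop_zero[OF A] bop_l2[OF A]
      bop_l2[OF B] bop_add[OF A] bop_add[OF B] bop_cmult[OF A] bop_cmult[OF B]\<close>)
qed

lemma observable_bop: "observable J A \<Longrightarrow> is_bop J A"
  by (simp add: observable_def)

lemma observable_adjoint:
  "observable J A \<Longrightarrow> f \<in> l2 J \<Longrightarrow> g \<in> l2 J \<Longrightarrow> l2inner J (A f) g = l2inner J f (A g)"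
  by (simp add: observable_def)

lemma observable_idop: "observable J (idop J)"
  unfolding observable_def using is_bop_idop[of J] by (auto simp: idop_def)

lemma observable_plus:
  assumes "observable J A" and "observable J B"
  shows "observable J (\<lambda>f j. A f j + B f j)"
  using assms unfolding observable_def
  by (simp add: is_bop_plus l2inner_add_left l2inner_add_right bop_l2)

lemma observable_scaleR:
  assumes "observable J A"
  shows "observable J (\<lambda>f j. complex_of_real t * A f j)"
  using assms unfolding observable_def by (simp add: is_bop_cmult l2inner_cmult_left l2inner_cmult_right)

lemma observable_square:
  assumes "observable J A"
  shows "observable J (\<lambda>f. A (A f))"
  using assms unfolding observable_def by (simp add: is_bop_comp bop_l2)

lemma observable_inner_self_real:
  assumes "observable J A" and "g \<in> l2 J"
  shows "Im (l2inner J (A g) g) = 0"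
proof -
  have "l2inner J (A g) g = cnj (l2inner J (A g) g)"
    using observable_adjoint[OF assms assms(2)] l2inner_commute[of J g "A g"] by simp
  then show ?thesis by (metis cnj.simps(2) neg_equal_zero)
qed

lemma notin_spectrumI:
  assumes "is_bop J B"
    and "\<And>f. f \<in> l2 J \<Longrightarrow> B (\<lambda>j. X f j - z * f j) = f"
    and "\<And>f. f \<in> l2 J \<Longrightarrow> (\<lambda>j. X (B f) j - z * B f j) = f"
  shows "z \<notin> spectrum J X"
  using assms unfolding spectrum_def by blast

lemma notin_spectrumE:
  assumes "z \<notin> spectrum J X"
  obtains B where "is_bop J B"
    and "\<And>f. f \<in> l2 J \<Longrightarrow> B (\<lambda>j. X f j - z * f j) = f"
    and "\<And>f. f \<in> l2 J \<Longrightarrow> (\<lambda>j. X (B f) j - z * B f j) = f"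
  using assms unfolding spectrum_def by blast

lemma notin_spectrum_cmult:
  assumes z: "z \<notin> spectrum J X" and t: "t \<noteq> 0"
  shows "t * z \<notin> spectrum J (\<lambda>f j. t * X f j)"
proof -
  obtain B where B: "is_bop J B"
    and left: "\<And>f. f \<in> l2 J \<Longrightarrow> B (\<lambda>j. X f j - z * f j) = f"
    and right: "\<And>f. f \<in> l2 J \<Longrightarrow> (\<lambda>j. X (B f) j - z * B f j) = f"
    using notin_spectrumE[OF z] by blast
  have "B (\<lambda>j. (1 / t) * f j) = B (\<lambda>j. (1 / t) * idop J f j)" for f
  proof (cases "f \<in> l2 J")
    case False
    then have "(\<lambda>j. (1 / t) * f j) \<notin> l2 J" using l2_cmult_iff[of "1 / t" f J] t by simp
    then show ?thesis using False by (simp add: idop_def bop_outside[OF B] bop_zero[OF B])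
  qed (simp add: idop_def)
  then have "(\<lambda>f. B (\<lambda>j. (1 / t) * f j)) = (\<lambda>f. B (\<lambda>j. (1 / t) * idop J f j))" by simp
  then have B': "is_bop J (\<lambda>f. B (\<lambda>j. (1 / t) * f j))"
    using is_bop_comp[OF B is_bop_cmult[OF is_bop_idop]] by metis
  show ?thesis
  proof (rule notin_spectrumI[OF B'])
    fix f assume "f \<in> l2 J"
    moreover have "(\<lambda>j. (1 / t) * (t * X f j - t * z * f j)) = (\<lambda>j. X f j - z * f j)"
      using t by (auto simp: fun_eq_iff field_simps)
    ultimately show "B (\<lambda>j. (1 / t) * (t * X f j - t * z * f j)) = f"
      using left by simp
  next
    fix f assume "f \<in> l2 J"
    then have "(\<lambda>j. X (B (\<lambda>j. (1 / t) * f j)) j - z * B (\<lambda>j. (1 / t) * f j) j) = (\<lambda>j. (1 / t) * f j)"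
      using right[OF l2_cmult] by blast
    then show "(\<lambda>j. t * X (B (\<lambda>j. (1 / t) * f j)) j - t * z * B (\<lambda>j. (1 / t) * f j) j) = f"
      using t by (simp add: fun_eq_iff right_diff_distrib[symmetric] mult.assoc)
  qed
qed

lemma spectrum_cmult:
  assumes t: "t \<noteq> 0"
  shows "spectrum J (\<lambda>f j. t * X f j) = (\<lambda>z. t * z) ` spectrum J X"
proof (intro set_eqI iffI)
  fix w assume "w \<in> spectrum J (\<lambda>f j. t * X f j)"
  then have "w / t \<in> spectrum J X"
    using notin_spectrum_cmult[of "w / t" J X t] t by auto
  then show "w \<in> (\<lambda>z. t * z) ` spectrum J X"
    using t by (auto intro: image_eqI[where x = "w / t"])
next
  fix w assume "w \<in> (\<lambda>z. t * z) ` spectrum J X"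
  then obtain z where z: "z \<in> spectrum J X" and w: "w = t * z" by blast
  have "(\<lambda>f j. (1 / t) * (t * X f j)) = X" using t by simp
  then show "w \<in> spectrum J (\<lambda>f j. t * X f j)"
    using notin_spectrum_cmult[of w J "\<lambda>f j. t * X f j" "1 / t"] z w t by auto
qed

lemma notin_spectrum_cubic:
  assumes X: "is_bop J X"
    and cube: "\<And>f. f \<in> l2 J \<Longrightarrow> X (X (X f)) = (\<lambda>j. c * X f j)"
    and z: "z * (z^2 - c) \<noteq> 0"
  shows "z \<notin> spectrum J X"
proof -
  define k where "k = - 1 / (z * (z^2 - c))"
  have k: "k * (- (z * (z^2 - c))) = 1" using z by (simp add: k_def)
  \<comment> \<open>\<open>(X - z)(X\<^sup>2 + zX + z\<^sup>2 - c) = X\<^sup>3 - cX - z(z\<^sup>2 - c)\<close>\<close>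
  define B where "B = (\<lambda>f j. k * X (X f) j + k * z * X f j + k * (z^2 - c) * idop J f j)"
  have B: "is_bop J B"
    unfolding B_def
    by (rule is_bop_plus[OF is_bop_plus[OF is_bop_cmult[OF is_bop_comp[OF X X]] is_bop_cmult[OF X]]
          is_bop_cmult[OF is_bop_idop]])
  have Bf: "B f = (\<lambda>j. k * X (X f) j + k * z * X f j + k * (z^2 - c) * f j)" if "f \<in> l2 J" for f
    using that by (simp add: B_def idop_def)
  show ?thesis
  proof (rule notin_spectrumI[OF B])
    fix f assume f: "f \<in> l2 J"
    have Xf: "X f \<in> l2 J" and XXf: "X (X f) \<in> l2 J" using f by (simp_all add: bop_l2[OF X])
    have Xg: "X (\<lambda>j. X f j - z * f j) = (\<lambda>j. X (X f) j - z * X f j)"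
      using bop_diff[OF X Xf l2_cmult[OF f]] bop_cmult[OF X f] by simp
    have XXg: "X (\<lambda>j. X (X f) j - z * X f j) = (\<lambda>j. c * X f j - z * X (X f) j)"
      using bop_diff[OF X XXf l2_cmult[OF Xf]] bop_cmult[OF X Xf] cube[OF f] by simp
    have "B (\<lambda>j. X f j - z * f j) = (\<lambda>j. k * (- (z * (z^2 - c))) * f j)"
      unfolding Bf[OF l2_diff[OF Xf l2_cmult[OF f]]] XXg Xg
      by (simp add: fun_eq_iff algebra_simps power2_eq_square)
    then show "B (\<lambda>j. X f j - z * f j) = f" unfolding k by simp
    have "X (B f) = (\<lambda>j. k * X (X (X f)) j + k * z * X (X f) j + k * (z^2 - c) * X f j)"
      unfolding Bf[OF f]
      using bop_lincomb[OF X l2_add[OF l2_cmult[OF XXf] l2_cmult[OF Xf]] l2_cmult[OF f], of 1 1]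
        bop_lincomb[OF X XXf Xf] bop_cmult[OF X f]
      by (simp add: bop_add[OF X] l2_add l2_cmult XXf Xf f)
    then have "(\<lambda>j. X (B f) j - z * B f j) = (\<lambda>j. k * (- (z * (z^2 - c))) * f j)"
      unfolding cube[OF f] Bf[OF f] by (simp add: fun_eq_iff algebra_simps power2_eq_square)
    then show "(\<lambda>j. X (B f) j - z * B f j) = f" unfolding k by simp
  qed
qed

lemma specR_subset_of_cubic:
  fixes c :: real
  assumes X: "is_bop J X"
    and cube: "\<And>f. f \<in> l2 J \<Longrightarrow> X (X (X f)) = (\<lambda>j. complex_of_real (c^2) * X f j)"
  shows "specR J X \<subseteq> {0, c, -c}"
proof
  fix x assume "x \<in> specR J X"
  then obtain z where z: "z \<in> spectrum J X" and x: "x = Re z" unfolding specR_def by blast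
  have "z * (z^2 - complex_of_real (c^2)) = 0"
  proof (rule ccontr)
    assume "z * (z^2 - complex_of_real (c^2)) \<noteq> 0"
    then have "z \<notin> spectrum J X" by (rule notin_spectrum_cubic[rotated 2]) (use X cube in auto)
    with z show False by contradiction
  qed
  then have "z = 0 \<or> z^2 = (complex_of_real c)^2" by simp
  then have "z = 0 \<or> z = complex_of_real c \<or> z = - complex_of_real c"
    by (metis power2_eq_iff)
  then show "x \<in> {0, c, -c}" using x by auto
qed

section \<open>Operators bounded below\<close>

definition bounded_below :: "'j set \<Rightarrow> (('j \<Rightarrow> complex) \<Rightarrow> ('j \<Rightarrow> complex)) \<Rightarrow> bool" where
  "bounded_below J T \<longleftrightarrow> (\<exists>c>0. \<forall>f\<in>l2 J. c * l2norm J f \<le> l2norm J (T f))"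

lemma bounded_below_cong:
  "(\<And>f. f \<in> l2 J \<Longrightarrow> S f = T f) \<Longrightarrow> bounded_below J S \<Longrightarrow> bounded_below J T"
  unfolding bounded_below_def by simp

lemma bounded_below_comp:
  assumes S: "bounded_below J S" and T: "bounded_below J T"
    and T_l2: "\<And>f. f \<in> l2 J \<Longrightarrow> T f \<in> l2 J"
  shows "bounded_below J (\<lambda>f. S (T f))"
proof -
  obtain c where c: "c > 0" "\<And>f. f \<in> l2 J \<Longrightarrow> c * l2norm J f \<le> l2norm J (S f)"
    using S unfolding bounded_below_def by blast
  obtain d where d: "d > 0" "\<And>f. f \<in> l2 J \<Longrightarrow> d * l2norm J f \<le> l2norm J (T f)"
    using T unfolding bounded_below_def by blast
  have "c * d * l2norm J f \<le> l2norm J (S (T f))" if "f \<in> l2 J" for f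
  proof -
    have "c * d * l2norm J f \<le> c * l2norm J (T f)"
      unfolding mult.assoc using d(2)[OF that] c(1) by simp
    also have "\<dots> \<le> l2norm J (S (T f))" by (rule c(2)[OF T_l2[OF that]])
    finally show ?thesis .
  qed
  then show ?thesis unfolding bounded_below_def using c(1) d(1) by (metis mult_pos_pos)
qed

lemma bounded_below_resolvent:
  assumes X: "is_bop J X" and z: "z \<notin> spectrum J X"
  shows "bounded_below J (\<lambda>f j. X f j - z * f j)"
proof -
  obtain B where B: "is_bop J B" and left: "\<And>f. f \<in> l2 J \<Longrightarrow> B (\<lambda>j. X f j - z * f j) = f"
    using notin_spectrumE[OF z] by blast
  obtain C where "C \<ge> 0" and C: "\<And>f. f \<in> l2 J \<Longrightarrow> l2norm J (B f) \<le> C * l2norm J f"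
    using bop_boundE[OF B] by blast
  have "1 / (C + 1) * l2norm J f \<le> l2norm J (\<lambda>j. X f j - z * f j)" if f: "f \<in> l2 J" for f
  proof -
    have "l2norm J f \<le> C * l2norm J (\<lambda>j. X f j - z * f j)"
      using C[OF l2_diff[OF bop_l2[OF X f] l2_cmult[OF f, of z]]] left[OF f] by simp
    also have "\<dots> \<le> (C + 1) * l2norm J (\<lambda>j. X f j - z * f j)"
      by (intro mult_right_mono l2norm_nonneg) simp
    finally show ?thesis using \<open>C \<ge> 0\<close> by (simp add: field_simps)
  qed
  then show ?thesis unfolding bounded_below_def using \<open>C \<ge> 0\<close>
    by (intro exI[of _ "1 / (C + 1)"]) simp
qed

lemma bounded_below_nonreal_shift:
  assumes A: "observable J A" and r: "Im r \<noteq> 0"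
  shows "bounded_below J (\<lambda>f j. A f j - r * f j)"
proof -
  have "\<bar>Im r\<bar> * l2norm J g \<le> l2norm J (\<lambda>j. A g j - r * g j)" if g: "g \<in> l2 J" for g
  proof -
    define u where "u = (\<lambda>j. A g j - complex_of_real (Re r) * g j)"
    define y where "y = \<i> * complex_of_real (Im r)"
    have u: "u \<in> l2 J" unfolding u_def by (intro l2_diff l2_cmult bop_l2[OF observable_bop[OF A]] g)
    have eq: "(\<lambda>j. A g j - r * g j) = (\<lambda>j. u j - y * g j)"
    proof
      fix j
      have "r * g j = complex_of_real (Re r) * g j + y * g j"
        unfolding y_def by (metis complex_eq distrib_right)
      then show "A g j - r * g j = u j - y * g j" by (simp add: u_def)
    qed
    \<comment> \<open>\<open>\<langle>u, g\<rangle>\<close> is real, so the cross term vanishes against the imaginary \<open>y\<close>\<close>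
    have "Im (l2inner J u g) = 0"
      using observable_inner_self_real[OF A g]
      by (simp add: u_def l2inner_diff_left bop_l2[OF observable_bop[OF A]] l2_cmult g
          l2inner_cmult_left l2inner_self)
    then have "Re (l2inner J u (\<lambda>j. y * g j)) = 0"
      by (simp add: l2inner_cmult_right y_def)
    then have "l2normsq J (\<lambda>j. A g j - r * g j) = l2normsq J u + (Im r)^2 * l2normsq J g"
      unfolding eq l2normsq_diff[OF u l2_cmult[OF g]] l2normsq_cmult by (simp add: y_def norm_mult)
    then have "(\<bar>Im r\<bar> * l2norm J g)^2 \<le> (l2norm J (\<lambda>j. A g j - r * g j))^2"
      using l2normsq_nonneg[of J u] by (simp add: power_mult_distrib l2norm_power2)
    then show ?thesis by (rule power2_le_imp_le) (rule l2norm_nonneg)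
  qed
  then show ?thesis unfolding bounded_below_def using r
    by (intro exI[of _ "\<bar>Im r\<bar>"]) simp
qed

definition op_norm :: "'j set \<Rightarrow> (('j \<Rightarrow> complex) \<Rightarrow> ('j \<Rightarrow> complex)) \<Rightarrow> real" where
  "op_norm J T = Sup ((\<lambda>f. l2norm J (T f)) ` {f \<in> l2 J. l2norm J f \<le> 1})"

lemma op_norm_least:
  assumes "\<And>f. f \<in> l2 J \<Longrightarrow> l2norm J f \<le> 1 \<Longrightarrow> l2norm J (T f) \<le> M"
  shows "op_norm J T \<le> M"
  unfolding op_norm_def by (rule cSup_least) (use assms in \<open>auto intro: exI[of _ "\<lambda>j. 0"]\<close>)

lemma op_norm_upper:
  assumes T: "is_bop J T" and "f \<in> l2 J" and "l2norm J f \<le> 1"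
  shows "l2norm J (T f) \<le> op_norm J T"
proof -
  obtain C where "C \<ge> 0" and C: "\<And>f. f \<in> l2 J \<Longrightarrow> l2norm J (T f) \<le> C * l2norm J f"
    using bop_boundE[OF T] by blast
  have "l2norm J (T g) \<le> C" if "g \<in> l2 J" "l2norm J g \<le> 1" for g
    using C[OF that(1)] mult_left_mono[OF that(2) \<open>C \<ge> 0\<close>] by simp
  then have bdd: "bdd_above ((\<lambda>f. l2norm J (T f)) ` {f \<in> l2 J. l2norm J f \<le> 1})"
    by (intro bdd_aboveI2[where M = C]) blast
  show ?thesis unfolding op_norm_def by (rule cSup_upper[OF _ bdd]) (use assms in blast)
qed

lemma op_norm_nonneg: "is_bop J T \<Longrightarrow> op_norm J T \<ge> 0"
  using op_norm_upper[of J T "\<lambda>j. 0"] by (simp add: bop_zero)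

lemma op_norm_bound:
  assumes T: "is_bop J T" and f: "f \<in> l2 J"
  shows "l2norm J (T f) \<le> op_norm J T * l2norm J f"
proof (cases "f = (\<lambda>j. 0)")
  case True
  then show ?thesis by (simp add: bop_zero[OF T])
next
  case False
  define n where "n = l2norm J f"
  have n: "n > 0" unfolding n_def by (rule l2norm_pos[OF f False])
  define g where "g = (\<lambda>j. complex_of_real (1 / n) * f j)"
  have "g \<in> l2 J" unfolding g_def by (rule l2_cmult[OF f])
  moreover have "l2norm J g = 1" using n unfolding g_def l2norm_cmult by (simp add: n_def norm_divide)
  ultimately have "l2norm J (T g) \<le> op_norm J T" by (intro op_norm_upper[OF T]) simp_all
  moreover have "l2norm J (T g) = l2norm J (T f) / n"
    using n unfolding g_def bop_cmult[OF T f] l2norm_cmult by (simp add: norm_divide)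
  ultimately show ?thesis using n by (simp add: n_def divide_le_eq mult.commute)
qed

lemma observable_square_shift_estimate:
  assumes T: "observable J T" and f: "f \<in> l2 J" "l2norm J f \<le> 1"
    and M: "\<And>g. g \<in> l2 J \<Longrightarrow> l2norm J (T g) \<le> M * l2norm J g"
    and "K \<ge> 0" and K: "K * l2norm J f \<le> l2norm J (\<lambda>j. T (T f) j - complex_of_real (M^2) * f j)"
  shows "l2normsq J (T f) * (K^2 + M^4) \<le> M^6"
proof -
  define x where "x = l2normsq J (T f)"
  define n where "n = l2normsq J f"
  have Tb: "is_bop J T" by (rule observable_bop[OF T])
  have Tf: "T f \<in> l2 J" and TTf: "T (T f) \<in> l2 J" using f by (simp_all add: bop_l2[OF Tb])
  have "n \<le> 1" using f(2) l2norm_nonneg[of J f]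
    by (simp add: n_def l2norm_power2[symmetric] power_le_one)
  have M_sq: "l2normsq J (T g) \<le> M^2 * l2normsq J g" if "g \<in> l2 J" for g
    using power_mono[OF M[OF that] l2norm_nonneg, of 2] by (simp add: l2norm_power2 power_mult_distrib)
  have "l2inner J (T (T f)) (\<lambda>j. complex_of_real (M^2) * f j) = complex_of_real (M^2 * x)"
    by (simp add: l2inner_cmult_right observable_adjoint[OF T Tf f(1)] l2inner_self[OF Tf] x_def)
  then have "l2normsq J (\<lambda>j. T (T f) j - complex_of_real (M^2) * f j)
      = l2normsq J (T (T f)) + M^4 * n - 2 * (M^2 * x)"
    by (simp add: l2normsq_diff[OF TTf l2_cmult[OF f(1)]] l2normsq_cmult n_def norm_power
        flip: power_mult)
  also have "\<dots> \<le> M^4 - M^2 * x"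
    using M_sq[OF Tf, folded x_def] mult_left_mono[OF \<open>n \<le> 1\<close>, of "M^4"] by (simp add: mult.commute)
  finally have upper: "K^2 * n \<le> M^4 - M^2 * x"
    using power_mono[OF K, of 2] \<open>K \<ge> 0\<close> l2norm_nonneg[of J f]
    by (simp add: n_def power_mult_distrib l2norm_power2)
  have "K^2 * x \<le> M^2 * (K^2 * n)"
    using mult_left_mono[OF M_sq[OF f(1)], of "K^2"] by (simp add: x_def n_def mult.left_commute)
  also have "\<dots> \<le> M^2 * (M^4 - M^2 * x)" by (rule mult_left_mono[OF upper]) simp
  finally show ?thesis by (simp add: x_def algebra_simps flip: power_add)
qed

text \<open>For self-adjoint \<open>T\<close>, \<open>\<parallel>T\<parallel>\<^sup>2\<close> lies in the approximate point spectrum of \<open>T\<^sup>2\<close>: by the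
  estimate above, a lower bound \<open>K > 0\<close> for \<open>T\<^sup>2 - \<parallel>T\<parallel>\<^sup>2\<close> would push \<open>\<parallel>T\<parallel>\<close> below itself.\<close>

lemma op_norm_eq_0_if_square_shift_bounded_below:
  assumes T: "observable J T"
    and "bounded_below J (\<lambda>f j. T (T f) j - complex_of_real ((op_norm J T)^2) * f j)"
  shows "op_norm J T = 0"
proof -
  define M where "M = op_norm J T"
  have Tb: "is_bop J T" by (rule observable_bop[OF T])
  obtain K where "K > 0"
    and K: "\<And>f. f \<in> l2 J \<Longrightarrow> K * l2norm J f \<le> l2norm J (\<lambda>j. T (T f) j - complex_of_real (M^2) * f j)"
    using assms(2) unfolding bounded_below_def M_def by blast
  have "M \<ge> 0" unfolding M_def by (rule op_norm_nonneg[OF Tb])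
  have "K^2 + M^4 > 0" using \<open>K > 0\<close> by (simp add: add_pos_nonneg)
  have "M \<le> sqrt (M^6 / (K^2 + M^4))"
    unfolding M_def
  proof (rule op_norm_least)
    fix f assume f: "f \<in> l2 J" "l2norm J f \<le> 1"
    have "l2normsq J (T f) * (K^2 + M^4) \<le> M^6"
      using observable_square_shift_estimate[OF T f _ _ K[OF f(1)]] op_norm_bound[OF Tb] \<open>K > 0\<close>
      by (simp add: M_def)
    then have "(l2norm J (T f))^2 \<le> M^6 / (K^2 + M^4)"
      using \<open>K^2 + M^4 > 0\<close> by (simp add: l2norm_power2 le_divide_eq)
    then show "l2norm J (T f) \<le> sqrt ((op_norm J T)^6 / (K^2 + (op_norm J T)^4))"
      by (simp add: M_def real_le_rsqrt)
  qed
  then have "M^2 \<le> M^6 / (K^2 + M^4)"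
    using power_mono[of M _ 2] \<open>M \<ge> 0\<close> \<open>K^2 + M^4 > 0\<close> by fastforce
  then have "M^2 * (K^2 + M^4) \<le> M^6"
    using \<open>K^2 + M^4 > 0\<close> by (simp add: le_divide_eq)
  then have "M^2 * K^2 \<le> 0" by (simp add: algebra_simps flip: power_add)
  then show ?thesis using \<open>K > 0\<close> by (simp add: M_def mult_le_0_iff)
qed

section \<open>Observables with at most two spectral values\<close>

lemma complex_quadratic_roots:
  fixes s p :: complex
  obtains r1 r2 where "r1 + r2 = s" and "r1 * r2 = p"
proof
  define w where "w = csqrt (s^2 - 4 * p)"
  show "(s + w) / 2 + (s - w) / 2 = s" by (simp add: field_simps)
  have "(s + w) / 2 * ((s - w) / 2) = (s^2 - w^2) / 4" by (simp add: field_simps power2_eq_square)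
  then show "(s + w) / 2 * ((s - w) / 2) = p" by (simp add: w_def)
qed

lemma bop_shift_comp:
  assumes A: "is_bop J A" and g: "g \<in> l2 J"
  shows "(\<lambda>j. A (\<lambda>j. A g j - b * g j) j - a * (A g j - b * g j))
    = (\<lambda>j. A (A g) j - (a + b) * A g j + a * b * g j)"
proof -
  have "A (\<lambda>j. A g j - b * g j) = (\<lambda>j. A (A g) j - b * A g j)"
    using bop_diff[OF A bop_l2[OF A g] l2_cmult[OF g, of b]] bop_cmult[OF A g, of b] by simp
  then show ?thesis by (simp add: algebra_simps)
qed

lemma bounded_below_quadratic_shift:
  fixes \<alpha> \<beta> :: real
  assumes A: "observable J A"
    and real_spectrum: "\<And>x. complex_of_real x \<in> spectrum J A \<Longrightarrow> x = \<alpha> \<or> x = \<beta>"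
    and "e \<noteq> 0"
  shows "bounded_below J (\<lambda>g j. A (A g) j - complex_of_real (\<alpha> + \<beta>) * A g j
    + (complex_of_real (\<alpha> * \<beta>) - e) * g j)"
proof -
  have Ab: "is_bop J A" by (rule observable_bop[OF A])
  define s where "s = complex_of_real (\<alpha> + \<beta>)"
  define q where "q = complex_of_real (\<alpha> * \<beta>)"
  have shift: "bounded_below J (\<lambda>g j. A g j - r * g j)" if "r * r - s * r + q = e" for r
  proof (cases "Im r = 0")
    case True
    then have r: "r = complex_of_real (Re r)" by (simp add: complex_eq_iff)
    have "r \<notin> spectrum J A"
    proof
      assume "r \<in> spectrum J A"
      then have "r = complex_of_real \<alpha> \<or> r = complex_of_real \<beta>" using real_spectrum r by metis
      with that \<open>e \<noteq> 0\<close> show False by (auto simp: s_def q_def algebra_simps)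
    qed
    then show ?thesis by (rule bounded_below_resolvent[OF Ab])
  qed (rule bounded_below_nonreal_shift[OF A])
  obtain r1 r2 where r: "r1 + r2 = s" "r1 * r2 = q - e" by (rule complex_quadratic_roots)
  have "r1 * r1 - s * r1 + q = e" "r2 * r2 - s * r2 + q = e"
    using r by (simp_all add: algebra_simps flip: r(1))
  then have "bounded_below J (\<lambda>g j. A g j - r1 * g j)" "bounded_below J (\<lambda>g j. A g j - r2 * g j)"
    by (simp_all add: shift)
  then have "bounded_below J (\<lambda>g. (\<lambda>g j. A g j - r1 * g j) ((\<lambda>g j. A g j - r2 * g j) g))"
    by (rule bounded_below_comp) (simp add: l2_diff l2_cmult bop_l2[OF Ab])
  then show ?thesis
  proof (rule bounded_below_cong[rotated])
    fix g assume g: "g \<in> l2 J"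
    show "(\<lambda>j. A (\<lambda>j. A g j - r2 * g j) j - r1 * (A g j - r2 * g j))
        = (\<lambda>j. A (A g) j - complex_of_real (\<alpha> + \<beta>) * A g j + (complex_of_real (\<alpha> * \<beta>) - e) * g j)"
      unfolding bop_shift_comp[OF Ab g] r by (simp add: s_def q_def)
  qed
qed

text \<open>The spectral mapping theorem for \<open>T = (A - \<alpha>)(A - \<beta>)\<close>, made explicit: if \<open>M = \<parallel>T\<parallel> \<noteq> 0\<close>,
  then \<open>T\<^sup>2 - M\<^sup>2 = (T - M)(T + M)\<close> is bounded below, which is impossible.\<close>

lemma observable_quadratic_relation:
  fixes \<alpha> \<beta> :: real
  assumes A: "observable J A"
    and real_spectrum: "\<And>x. complex_of_real x \<in> spectrum J A \<Longrightarrow> x = \<alpha> \<or> x = \<beta>"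
    and f: "f \<in> l2 J"
  shows "A (A f) = (\<lambda>j. complex_of_real (\<alpha> + \<beta>) * A f j - complex_of_real (\<alpha> * \<beta>) * f j)"
proof -
  define T where "T = (\<lambda>f j. A (A f) j + complex_of_real (- (\<alpha> + \<beta>)) * A f j
      + complex_of_real (\<alpha> * \<beta>) * idop J f j)"
  have T: "observable J T"
    unfolding T_def
    by (rule observable_plus[OF observable_plus[OF observable_square[OF A] observable_scaleR[OF A]]
          observable_scaleR[OF observable_idop]])
  have Tb: "is_bop J T" by (rule observable_bop[OF T])
  have Tg: "T g = (\<lambda>j. A (A g) j - complex_of_real (\<alpha> + \<beta>) * A g j + complex_of_real (\<alpha> * \<beta>) * g j)"
    if "g \<in> l2 J" for g
    using that by (simp add: T_def idop_def algebra_simps)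
  have T_shift: "bounded_below J (\<lambda>g j. T g j - e * g j)" if "e \<noteq> 0" for e
    using bounded_below_quadratic_shift[OF A real_spectrum that]
  proof (rule bounded_below_cong[rotated])
    fix g assume "g \<in> l2 J"
    then show "(\<lambda>j. A (A g) j - complex_of_real (\<alpha> + \<beta>) * A g j + (complex_of_real (\<alpha> * \<beta>) - e) * g j)
        = (\<lambda>j. T g j - e * g j)"
      unfolding Tg[OF \<open>g \<in> l2 J\<close>] by (simp add: algebra_simps)
  qed
  define M where "M = op_norm J T"
  have "M = 0"
  proof (rule ccontr)
    assume "M \<noteq> 0"
    then have "bounded_below J (\<lambda>g j. T g j - M * g j)" "bounded_below J (\<lambda>g j. T g j - (- M) * g j)"
      using T_shift[of "complex_of_real M"] T_shift[of "- complex_of_real M"] by simp_all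
    then have "bounded_below J (\<lambda>g. (\<lambda>g j. T g j - M * g j) ((\<lambda>g j. T g j - (- M) * g j) g))"
      by (rule bounded_below_comp) (simp add: l2_add l2_cmult bop_l2[OF Tb])
    then have "bounded_below J (\<lambda>g j. T (T g) j - complex_of_real ((op_norm J T)^2) * g j)"
    proof (rule bounded_below_cong[rotated])
      fix g assume g: "g \<in> l2 J"
      show "(\<lambda>j. T (\<lambda>j. T g j - (- M) * g j) j - M * (T g j - (- M) * g j))
          = (\<lambda>j. T (T g) j - complex_of_real ((op_norm J T)^2) * g j)"
        unfolding bop_shift_comp[OF Tb g] by (simp add: M_def power2_eq_square)
    qed
    with \<open>M \<noteq> 0\<close> show False
      using op_norm_eq_0_if_square_shift_bounded_below[OF T] by (simp add: M_def)
  qed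
  then have "T f = (\<lambda>j. 0)"
    using op_norm_bound[OF Tb f] l2norm_pos[OF bop_l2[OF Tb f]] by (force simp: M_def)
  then show ?thesis
    using Tg[OF f] by (simp add: fun_eq_iff algebra_simps eq_neg_iff_add_eq_0[symmetric])
qed

lemma basis_vec_l2: "j \<in> I \<Longrightarrow> basis_vec j \<in> l2 I"
proof (rule l2I)
  assume "j \<in> I"
  then show "\<And>i. i \<notin> I \<Longrightarrow> basis_vec j i = 0" by (auto simp: basis_vec_def)
  have "finite {i \<in> I. (cmod (basis_vec j i))^2 \<noteq> 0}"
    by (rule finite_subset[of _ "{j}"]) (auto simp: basis_vec_def)
  then show "(\<lambda>i. (cmod (basis_vec j i))^2) summable_on I"
    by (rule finite_nonzero_values_imp_summable_on)
qed

lemma basis_vec_notin_l2: "j \<notin> I \<Longrightarrow> basis_vec j \<notin> l2 I"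
  using l2_outside[of "basis_vec j" I j] by (auto simp: basis_vec_def)

lemma bop_basis_vec_l2: "is_bop I A \<Longrightarrow> A (basis_vec j) \<in> l2 I"
  by (cases "j \<in> I") (auto simp: bop_l2 basis_vec_l2 bop_outside basis_vec_notin_l2)

lemma l2inner_basis_vec: "j \<in> I \<Longrightarrow> l2inner I (basis_vec j) g = g j"
proof -
  assume j: "j \<in> I"
  have "l2inner I (basis_vec j) g = infsum (\<lambda>k. cnj (basis_vec j k) * g k) {j}"
    unfolding l2inner_def by (rule infsum_cong_neutral) (use j in \<open>auto simp: basis_vec_def\<close>)
  then show ?thesis by (simp add: basis_vec_def)
qed

lemma observable_matrix_cnj:
  assumes A: "observable I A"
  shows "cnj (A (basis_vec i) m) = A (basis_vec m) i"
proof -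
  have Ab: "is_bop I A" by (rule observable_bop[OF A])
  consider "i \<in> I" "m \<in> I" | "i \<notin> I" | "m \<notin> I" by blast
  then show ?thesis
  proof cases
    case 1
    then have "l2inner I (A (basis_vec i)) (basis_vec m) = l2inner I (basis_vec i) (A (basis_vec m))"
      by (intro observable_adjoint[OF A] basis_vec_l2)
    then show ?thesis
      using 1 l2inner_commute[of I "A (basis_vec i)" "basis_vec m"] by (simp add: l2inner_basis_vec)
  next
    case 2
    then show ?thesis
      using l2_outside[OF bop_basis_vec_l2[OF Ab]] bop_outside[OF Ab basis_vec_notin_l2] by simp
  next
    case 3
    then show ?thesis
      using l2_outside[OF bop_basis_vec_l2[OF Ab]] bop_outside[OF Ab basis_vec_notin_l2] by simp
  qed
qed

lemma observable_matrix_expansion: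
  assumes A: "observable I A" and g: "g \<in> l2 I"
  shows "A g i = infsum (\<lambda>m. A (basis_vec m) i * g m) I"
proof (cases "i \<in> I")
  case True
  have "A g i = l2inner I (basis_vec i) (A g)" by (simp add: l2inner_basis_vec True)
  also have "\<dots> = l2inner I (A (basis_vec i)) g"
    by (rule observable_adjoint[OF A basis_vec_l2[OF True] g, symmetric])
  finally show ?thesis unfolding l2inner_def observable_matrix_cnj[OF A] .
next
  case False
  have Ab: "is_bop I A" by (rule observable_bop[OF A])
  show ?thesis
    using l2_outside[OF bop_l2[OF Ab g] False] l2_outside[OF bop_basis_vec_l2[OF Ab] False] by simp
qed

lemma observable_transpose_expansion:
  assumes A: "observable I A" and g: "g \<in> l2 I"
  shows "cnj (A (\<lambda>k. cnj (g k)) j) = infsum (\<lambda>k. g k * A (basis_vec j) k) I"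
proof -
  have "cnj (A (\<lambda>k. cnj (g k)) j) = infsum (\<lambda>m. cnj (A (basis_vec m) j) * g m) I"
    unfolding observable_matrix_expansion[OF A l2_cnj[OF g]] by (simp flip: infsum_cnj)
  then show ?thesis unfolding observable_matrix_cnj[OF A] by (simp add: mult.commute)
qed

lemma case_prod_cmod_power2: "(\<lambda>(i, k). (cmod (\<psi> (i, k)))^2) = (\<lambda>x. (cmod (\<psi> x))^2)"
  by (auto simp: fun_eq_iff)

lemma l2_Sigma_summable:
  "\<psi> \<in> l2 (I \<times> K) \<Longrightarrow> (\<lambda>(i, k). (cmod (\<psi> (i, k)))^2) summable_on Sigma I (\<lambda>_. K)"
  unfolding case_prod_cmod_power2 by (rule l2D)

lemma l2_row:
  assumes \<psi>: "\<psi> \<in> l2 (I \<times> K)"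
  shows "(\<lambda>k. \<psi> (i, k)) \<in> l2 K"
proof (cases "i \<in> I")
  case True
  show ?thesis
  proof (rule l2I)
    show "\<And>k. k \<notin> K \<Longrightarrow> \<psi> (i, k) = 0" using l2_outside[OF \<psi>] by auto
    from summable_on_SigmaD1[OF l2_Sigma_summable[OF \<psi>] True]
    show "(\<lambda>k. (cmod (\<psi> (i, k)))^2) summable_on K" by simp
  qed
next
  case False
  then have "(\<lambda>k. \<psi> (i, k)) = (\<lambda>k. 0)" using l2_outside[OF \<psi>] by auto
  then show ?thesis by simp
qed

lemma
  assumes \<psi>: "\<psi> \<in> l2 (I \<times> K)"
  shows l2_swap: "(\<lambda>(k, i). \<psi> (i, k)) \<in> l2 (K \<times> I)"
    and l2normsq_swap: "l2normsq (K \<times> I) (\<lambda>(k, i). \<psi> (i, k)) = l2normsq (I \<times> K) \<psi>"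
proof -
  have img: "prod.swap ` (K \<times> I) = I \<times> K" by (simp add: product_swap)
  have inj: "inj_on prod.swap (K \<times> I)" by simp
  have e: "(\<lambda>x. (cmod ((\<lambda>(k, i). \<psi> (i, k)) x))^2) = (\<lambda>x. (cmod (\<psi> x))^2) \<circ> prod.swap"
    by (auto simp: fun_eq_iff)
  show "(\<lambda>(k, i). \<psi> (i, k)) \<in> l2 (K \<times> I)"
  proof (rule l2I)
    show "\<And>x. x \<notin> K \<times> I \<Longrightarrow> (\<lambda>(k, i). \<psi> (i, k)) x = 0" using l2_outside[OF \<psi>] by auto
    have "(\<lambda>x. (cmod (\<psi> x))^2) summable_on prod.swap ` (K \<times> I)"
      unfolding img by (rule l2D[OF \<psi>])
    then show "(\<lambda>x. (cmod ((\<lambda>(k, i). \<psi> (i, k)) x))^2) summable_on K \<times> I"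
      unfolding e using summable_on_reindex[OF inj] by blast
  qed
  have "l2normsq (I \<times> K) \<psi> = infsum (\<lambda>x. (cmod (\<psi> x))^2) (prod.swap ` (K \<times> I))"
    unfolding img l2normsq_def ..
  also have "\<dots> = l2normsq (K \<times> I) (\<lambda>(k, i). \<psi> (i, k))"
    unfolding l2normsq_def e by (rule infsum_reindex[OF inj])
  finally show "l2normsq (K \<times> I) (\<lambda>(k, i). \<psi> (i, k)) = l2normsq (I \<times> K) \<psi>" ..
qed

lemma l2_col: "\<psi> \<in> l2 (I \<times> K) \<Longrightarrow> (\<lambda>i. \<psi> (i, k)) \<in> l2 I"
  using l2_row[OF l2_swap, of \<psi> I K k] by simp

lemma
  assumes \<psi>: "\<psi> \<in> l2 (I \<times> K)"
  shows l2normsq_rows_summable: "(\<lambda>i. l2normsq K (\<lambda>k. \<psi> (i, k))) summable_on I"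
    and l2normsq_sum_rows: "infsum (\<lambda>i. l2normsq K (\<lambda>k. \<psi> (i, k))) I = l2normsq (I \<times> K) \<psi>"
  using summable_on_Sigma_banach[OF l2_Sigma_summable[OF \<psi>]]
    infsum_Sigma'_banach[OF l2_Sigma_summable[OF \<psi>]]
  by (simp_all add: l2normsq_def case_prod_cmod_power2)

lemma
  assumes F_l2: "\<And>g. g \<in> l2 K \<Longrightarrow> F g \<in> l2 K" and F_zero: "F (\<lambda>k. 0) = (\<lambda>k. 0)"
    and F_bound: "\<And>g. g \<in> l2 K \<Longrightarrow> l2normsq K (F g) \<le> C * l2normsq K g" and "C \<ge> 0"
    and \<psi>: "\<psi> \<in> l2 (I \<times> K)"
  shows l2_rowwise: "(\<lambda>(i, j). F (\<lambda>k. \<psi> (i, k)) j) \<in> l2 (I \<times> K)"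
    and l2normsq_rowwise_le: "l2normsq (I \<times> K) (\<lambda>(i, j). F (\<lambda>k. \<psi> (i, k)) j) \<le> C * l2normsq (I \<times> K) \<psi>"
proof -
  define \<Phi> where "\<Phi> = (\<lambda>(i, j). F (\<lambda>k. \<psi> (i, k)) j)"
  define \<phi> where "\<phi> = (\<lambda>i. l2normsq K (F (\<lambda>k. \<psi> (i, k))))"
  have rows: "(\<lambda>k. \<psi> (i, k)) \<in> l2 K" for i by (rule l2_row[OF \<psi>])
  have rs: "(\<lambda>i. l2normsq K (\<lambda>k. \<psi> (i, k))) summable_on I" by (rule l2normsq_rows_summable[OF \<psi>])
  have \<phi>s: "\<phi> summable_on I" unfolding \<phi>_def
    by (rule summable_on_comparison_test[OF summable_on_cmult_right[OF rs, of C]])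
       (use F_bound[OF rows] l2normsq_nonneg in auto)
  have "((\<lambda>y. (cmod (\<Phi> (x, y)))^2) has_sum \<phi> x) K" for x
    unfolding \<Phi>_def \<phi>_def l2normsq_def by (simp add: l2D F_l2 rows)
  then have sumS: "(\<lambda>x. (cmod (\<Phi> x))^2) summable_on Sigma I (\<lambda>_. K)"
    by (rule summable_on_SigmaI[OF _ \<phi>s]) simp
  show l2\<Phi>: "(\<lambda>(i, j). F (\<lambda>k. \<psi> (i, k)) j) \<in> l2 (I \<times> K)"
  proof (rule l2I)
    fix x assume x: "x \<notin> I \<times> K"
    obtain i j where ij: "x = (i, j)" by (cases x)
    show "(\<lambda>(i, j). F (\<lambda>k. \<psi> (i, k)) j) x = 0"
    proof (cases "i \<in> I")
      case True
      then have "j \<notin> K" using x ij by auto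
      then show ?thesis using l2_outside[OF F_l2[OF rows]] ij by simp
    next
      case False
      then have "(\<lambda>k. \<psi> (i, k)) = (\<lambda>k. 0)" using l2_outside[OF \<psi>] by auto
      then show ?thesis using F_zero ij by simp
    qed
  qed (use sumS in \<open>simp add: \<Phi>_def\<close>)
  have "l2normsq (I \<times> K) \<Phi> = infsum \<phi> I"
    using l2normsq_sum_rows[OF l2\<Phi>[folded \<Phi>_def]] unfolding \<phi>_def \<Phi>_def by simp
  also have "\<dots> \<le> infsum (\<lambda>i. C * l2normsq K (\<lambda>k. \<psi> (i, k))) I"
    by (rule infsum_mono[OF \<phi>s summable_on_cmult_right[OF rs]]) (simp add: \<phi>_def F_bound rows)
  also have "\<dots> = C * l2normsq (I \<times> K) \<psi>"
    by (simp add: infsum_cmult_right' l2normsq_sum_rows[OF \<psi>])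
  finally show "l2normsq (I \<times> K) (\<lambda>(i, j). F (\<lambda>k. \<psi> (i, k)) j) \<le> C * l2normsq (I \<times> K) \<psi>"
    unfolding \<Phi>_def .
qed

lemma infsum_bilinear_swap:
  assumes u: "u \<in> l2 I" and v: "v \<in> l2 K" and \<psi>: "\<psi> \<in> l2 (I \<times> K)"
  shows "infsum (\<lambda>m. u m * infsum (\<lambda>k. \<psi> (m, k) * v k) K) I
       = infsum (\<lambda>k. infsum (\<lambda>m. u m * \<psi> (m, k)) I * v k) K"
proof -
  define F where "F = (\<lambda>m k. u m * \<psi> (m, k) * v k)"
  have "((\<lambda>k. (cmod (u m * v k))^2) has_sum (cmod (u m))^2 * l2normsq K v) K" for m
    unfolding l2normsq_def norm_mult power_mult_distrib
    by (intro has_sum_cmult_right has_sum_infsum l2D v)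
  then have uv: "(\<lambda>(m, k). (cmod (u m * v k))^2) summable_on Sigma I (\<lambda>_. K)"
    by (intro summable_on_SigmaI[where g = "\<lambda>m. (cmod (u m))^2 * l2normsq K v"]
        summable_on_cmult_left l2D u) auto
  have "(\<lambda>x. (cmod (\<psi> x))^2 + (\<lambda>(m, k). (cmod (u m * v k))^2) x) summable_on I \<times> K"
    by (intro summable_on_add l2D \<psi> uv[simplified])
  then have "(\<lambda>x. norm ((\<lambda>(m, k). F m k) x)) summable_on I \<times> K"
  proof (rule Infinite_Sum.abs_summable_on_comparison_test')
    fix x :: "'a \<times> 'b"
    obtain m k where x: "x = (m, k)" by (cases x)
    have "cmod (\<psi> (m, k) * (u m * v k)) \<le> (cmod (\<psi> (m, k)))^2 + (cmod (u m * v k))^2"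
      by (rule cmod_mult_le_sq_add)
    then show "norm ((\<lambda>(m, k). F m k) x) \<le> (cmod (\<psi> x))^2 + (\<lambda>(m, k). (cmod (u m * v k))^2) x"
      unfolding x F_def by (simp add: mult_ac)
  qed
  then have sF: "(\<lambda>(m, k). F m k) summable_on I \<times> K" by (rule abs_summable_summable)
  have "infsum (\<lambda>m. u m * infsum (\<lambda>k. \<psi> (m, k) * v k) K) I = infsum (\<lambda>m. infsum (\<lambda>k. F m k) K) I"
    unfolding F_def by (simp add: infsum_cmult_right'[symmetric] mult.assoc)
  also have "\<dots> = infsum (\<lambda>k. infsum (\<lambda>m. F m k) I) K"
    by (rule infsum_swap_banach[OF sF])
  also have "\<dots> = infsum (\<lambda>k. infsum (\<lambda>m. u m * \<psi> (m, k)) I * v k) K"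
    unfolding F_def by (simp add: infsum_cmult_left'[symmetric])
  finally show ?thesis .
qed

section \<open>The operators \<open>A \<otimes> I\<close> and \<open>I \<otimes> A\<^sup>T\<close>\<close>

definition tensor_left :: "'a set \<Rightarrow> (('a \<Rightarrow> complex) \<Rightarrow> ('a \<Rightarrow> complex))
    \<Rightarrow> ('a \<times> 'a \<Rightarrow> complex) \<Rightarrow> ('a \<times> 'a \<Rightarrow> complex)" where
  "tensor_left I A = (\<lambda>\<psi>. if \<psi> \<in> l2 (I \<times> I) then (\<lambda>(i, j). A (\<lambda>k. \<psi> (k, j)) i) else (\<lambda>x. 0))"

text \<open>For an observable \<open>A\<close> this is \<open>I \<otimes> A\<^sup>T\<close>, since \<open>\<Sum>\<^sub>k \<psi>(i,k) A\<^sub>k\<^sub>j = cnj (\<Sum>\<^sub>k A\<^sub>j\<^sub>k cnj \<psi>(i,k))\<close>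
  by \<open>A\<^sub>k\<^sub>j = cnj A\<^sub>j\<^sub>k\<close>; in the conjugated form it is bounded for every bounded \<open>A\<close>.\<close>

definition tensor_right :: "'a set \<Rightarrow> (('a \<Rightarrow> complex) \<Rightarrow> ('a \<Rightarrow> complex))
    \<Rightarrow> ('a \<times> 'a \<Rightarrow> complex) \<Rightarrow> ('a \<times> 'a \<Rightarrow> complex)" where
  "tensor_right I A = (\<lambda>\<psi>. if \<psi> \<in> l2 (I \<times> I)
      then (\<lambda>(i, j). cnj (A (\<lambda>k. cnj (\<psi> (i, k))) j)) else (\<lambda>x. 0))"

lemma tensor_left_apply:
  "\<psi> \<in> l2 (I \<times> I) \<Longrightarrow> tensor_left I A \<psi> = (\<lambda>(i, j). A (\<lambda>k. \<psi> (k, j)) i)"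
  by (simp add: tensor_left_def)

lemma tensor_right_apply:
  "\<psi> \<in> l2 (I \<times> I) \<Longrightarrow> tensor_right I A \<psi> = (\<lambda>(i, j). cnj (A (\<lambda>k. cnj (\<psi> (i, k))) j))"
  by (simp add: tensor_right_def)

lemma is_bop_tensor_left:
  assumes A: "is_bop I A"
  shows "is_bop (I \<times> I) (tensor_left I A)"
proof -
  obtain C where "C \<ge> 0" and C: "\<And>g. g \<in> l2 I \<Longrightarrow> l2normsq I (A g) \<le> C * l2normsq I g"
    using bop_normsq_boundE[OF A] by blast
  have bound: "tensor_left I A \<psi> \<in> l2 (I \<times> I) \<and>
      l2normsq (I \<times> I) (tensor_left I A \<psi>) \<le> C * l2normsq (I \<times> I) \<psi>"
    if \<psi>: "\<psi> \<in> l2 (I \<times> I)" for \<psi>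
  proof -
    define \<psi>' where "\<psi>' = (\<lambda>(k, i). \<psi> (i, k))"
    have \<psi>': "\<psi>' \<in> l2 (I \<times> I)" unfolding \<psi>'_def by (rule l2_swap[OF \<psi>])
    define \<Phi> where "\<Phi> = (\<lambda>(i, j). A (\<lambda>k. \<psi>' (i, k)) j)"
    have \<Phi>: "\<Phi> \<in> l2 (I \<times> I)" "l2normsq (I \<times> I) \<Phi> \<le> C * l2normsq (I \<times> I) \<psi>'"
      unfolding \<Phi>_def
      using l2_rowwise[where F = A, OF bop_l2[OF A] bop_zero[OF A] C \<open>C \<ge> 0\<close> \<psi>']
        l2normsq_rowwise_le[where F = A, OF bop_l2[OF A] bop_zero[OF A] C \<open>C \<ge> 0\<close> \<psi>']
      by simp_all
    have "tensor_left I A \<psi> = (\<lambda>(k, i). \<Phi> (i, k))"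
      unfolding tensor_left_apply[OF \<psi>] \<Phi>_def \<psi>'_def by (auto simp: fun_eq_iff)
    then show ?thesis
      using l2_swap[OF \<Phi>(1)] l2normsq_swap[OF \<Phi>(1)] \<Phi>(2) l2normsq_swap[OF \<psi>]
      unfolding \<psi>'_def by simp
  qed
  show ?thesis
  proof (rule is_bopI[where C = C])
    fix \<psi> assume "\<psi> \<in> l2 (I \<times> I)"
    then show "tensor_left I A \<psi> \<in> l2 (I \<times> I)"
      and "l2normsq (I \<times> I) (tensor_left I A \<psi>) \<le> C * l2normsq (I \<times> I) \<psi>"
      using bound by simp_all
  next
    fix \<psi> \<phi> assume \<psi>: "\<psi> \<in> l2 (I \<times> I)" and \<phi>: "\<phi> \<in> l2 (I \<times> I)"
    show "tensor_left I A (\<lambda>x. \<psi> x + \<phi> x) = (\<lambda>x. tensor_left I A \<psi> x + tensor_left I A \<phi> x)"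
      unfolding tensor_left_apply[OF \<psi>] tensor_left_apply[OF \<phi>] tensor_left_apply[OF l2_add[OF \<psi> \<phi>]]
      using bop_add[OF A l2_col[OF \<psi>] l2_col[OF \<phi>]] by (auto simp: fun_eq_iff)
  next
    fix \<psi> c assume \<psi>: "\<psi> \<in> l2 (I \<times> I)"
    show "tensor_left I A (\<lambda>x. c * \<psi> x) = (\<lambda>x. c * tensor_left I A \<psi> x)"
      unfolding tensor_left_apply[OF \<psi>] tensor_left_apply[OF l2_cmult[OF \<psi>]]
      using bop_cmult[OF A l2_col[OF \<psi>]] by (auto simp: fun_eq_iff)
  qed (simp_all add: tensor_left_def \<open>C \<ge> 0\<close>)
qed

lemma is_bop_tensor_right:
  assumes A: "is_bop I A"
  shows "is_bop (I \<times> I) (tensor_right I A)"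
proof -
  obtain C where "C \<ge> 0" and C: "\<And>g. g \<in> l2 I \<Longrightarrow> l2normsq I (A g) \<le> C * l2normsq I g"
    using bop_normsq_boundE[OF A] by blast
  define F where "F = (\<lambda>g j. cnj (A (\<lambda>k. cnj (g k)) j))"
  have F_l2: "F g \<in> l2 I" if "g \<in> l2 I" for g
    unfolding F_def by (intro l2_cnj bop_l2[OF A] l2_cnj that)
  have F_zero: "F (\<lambda>k. 0) = (\<lambda>k. 0)" unfolding F_def using bop_zero[OF A] by simp
  have F_bound: "l2normsq I (F g) \<le> C * l2normsq I g" if "g \<in> l2 I" for g
    using C[OF l2_cnj[OF that]] by (simp add: F_def l2normsq_def)
  have eq: "tensor_right I A \<psi> = (\<lambda>(i, j). F (\<lambda>k. \<psi> (i, k)) j)" if "\<psi> \<in> l2 (I \<times> I)" for \<psi>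
    using that by (simp add: tensor_right_apply F_def)
  show ?thesis
  proof (rule is_bopI[where C = C])
    fix \<psi> assume \<psi>: "\<psi> \<in> l2 (I \<times> I)"
    show "tensor_right I A \<psi> \<in> l2 (I \<times> I)"
      unfolding eq[OF \<psi>] by (rule l2_rowwise[OF F_l2 F_zero F_bound \<open>C \<ge> 0\<close> \<psi>])
    show "l2normsq (I \<times> I) (tensor_right I A \<psi>) \<le> C * l2normsq (I \<times> I) \<psi>"
      unfolding eq[OF \<psi>] by (rule l2normsq_rowwise_le[OF F_l2 F_zero F_bound \<open>C \<ge> 0\<close> \<psi>])
  next
    fix \<psi> \<phi> assume \<psi>: "\<psi> \<in> l2 (I \<times> I)" and \<phi>: "\<phi> \<in> l2 (I \<times> I)"
    show "tensor_right I A (\<lambda>x. \<psi> x + \<phi> x) = (\<lambda>x. tensor_right I A \<psi> x + tensor_right I A \<phi> x)"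
      unfolding tensor_right_apply[OF \<psi>] tensor_right_apply[OF \<phi>] tensor_right_apply[OF l2_add[OF \<psi> \<phi>]]
      using bop_add[OF A l2_cnj[OF l2_row[OF \<psi>]] l2_cnj[OF l2_row[OF \<phi>]]] by (auto simp: fun_eq_iff)
  next
    fix \<psi> c assume \<psi>: "\<psi> \<in> l2 (I \<times> I)"
    show "tensor_right I A (\<lambda>x. c * \<psi> x) = (\<lambda>x. c * tensor_right I A \<psi> x)"
      unfolding tensor_right_apply[OF \<psi>] tensor_right_apply[OF l2_cmult[OF \<psi>]]
      using bop_cmult[OF A l2_cnj[OF l2_row[OF \<psi>]], of "cnj c"] by (auto simp: fun_eq_iff)
  qed (simp_all add: tensor_right_def \<open>C \<ge> 0\<close>)
qed

lemma Delta_eq_tensor_diff: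
  assumes A: "observable I A"
  shows "Delta I A = (\<lambda>\<psi> x. tensor_left I A \<psi> x - tensor_right I A \<psi> x)"
proof (intro ext)
  fix \<psi> :: "nat \<times> nat \<Rightarrow> complex" and x :: "nat \<times> nat"
  obtain i j where x: "x = (i, j)" by (cases x)
  show "Delta I A \<psi> x = tensor_left I A \<psi> x - tensor_right I A \<psi> x"
  proof (cases "\<psi> \<in> l2 (I \<times> I)")
    case True
    then show ?thesis
      unfolding Delta_def tensor_left_apply[OF True] tensor_right_apply[OF True] x
      using observable_transpose_expansion[OF A l2_row[OF True, of i], of j] by simp
  qed (simp add: Delta_def tensor_left_def tensor_right_def)
qed

lemma tensor_left_square:
  assumes A: "is_bop I A"
    and quad: "\<And>g. g \<in> l2 I \<Longrightarrow> A (A g) = (\<lambda>j. s * A g j - q * g j)"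
    and \<psi>: "\<psi> \<in> l2 (I \<times> I)"
  shows "tensor_left I A (tensor_left I A \<psi>) = (\<lambda>x. s * tensor_left I A \<psi> x - q * \<psi> x)"
proof -
  have "(\<lambda>k. tensor_left I A \<psi> (k, j)) = A (\<lambda>k. \<psi> (k, j))" for j
    by (simp add: tensor_left_apply[OF \<psi>])
  then show ?thesis
    unfolding tensor_left_apply[OF bop_l2[OF is_bop_tensor_left[OF A] \<psi>]]
    by (auto simp: fun_eq_iff quad[OF l2_col[OF \<psi>]] tensor_left_apply[OF \<psi>])
qed

lemma tensor_right_square:
  fixes s q :: real
  assumes A: "is_bop I A"
    and quad: "\<And>g. g \<in> l2 I \<Longrightarrow> A (A g) = (\<lambda>j. complex_of_real s * A g j - complex_of_real q * g j)"
    and \<psi>: "\<psi> \<in> l2 (I \<times> I)"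
  shows "tensor_right I A (tensor_right I A \<psi>)
    = (\<lambda>x. complex_of_real s * tensor_right I A \<psi> x - complex_of_real q * \<psi> x)"
proof -
  have "(\<lambda>k. cnj (tensor_right I A \<psi> (i, k))) = A (\<lambda>k. cnj (\<psi> (i, k)))" for i
    by (simp add: tensor_right_apply[OF \<psi>])
  then show ?thesis
    unfolding tensor_right_apply[OF bop_l2[OF is_bop_tensor_right[OF A] \<psi>]]
    by (auto simp: fun_eq_iff quad[OF l2_cnj[OF l2_row[OF \<psi>]]] tensor_right_apply[OF \<psi>])
qed

lemma tensor_left_right_commute:
  fixes I :: "nat set"
  assumes A: "observable I A" and \<psi>: "\<psi> \<in> l2 (I \<times> I)"
  shows "tensor_left I A (tensor_right I A \<psi>) = tensor_right I A (tensor_left I A \<psi>)"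
proof
  fix x :: "nat \<times> nat"
  obtain i j where x: "x = (i, j)" by (cases x)
  have Ab: "is_bop I A" by (rule observable_bop[OF A])
  have R\<psi>: "tensor_right I A \<psi> \<in> l2 (I \<times> I)" by (rule bop_l2[OF is_bop_tensor_right[OF Ab] \<psi>])
  have L\<psi>: "tensor_left I A \<psi> \<in> l2 (I \<times> I)" by (rule bop_l2[OF is_bop_tensor_left[OF Ab] \<psi>])
  define u where "u = (\<lambda>m. A (basis_vec m) i)"
  define v where "v = A (basis_vec j)"
  have "u = (\<lambda>m. cnj (A (basis_vec i) m))" unfolding u_def by (simp add: observable_matrix_cnj[OF A])
  then have u: "u \<in> l2 I" by (simp add: l2_cnj bop_basis_vec_l2[OF Ab])
  have v: "v \<in> l2 I" unfolding v_def by (rule bop_basis_vec_l2[OF Ab])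
  have "tensor_left I A (tensor_right I A \<psi>) x = infsum (\<lambda>m. u m * tensor_right I A \<psi> (m, j)) I"
    unfolding tensor_left_apply[OF R\<psi>] x u_def by (simp add: observable_matrix_expansion[OF A l2_col[OF R\<psi>]])
  also have "\<dots> = infsum (\<lambda>m. u m * infsum (\<lambda>k. \<psi> (m, k) * v k) I) I"
    unfolding tensor_right_apply[OF \<psi>] v_def by (simp add: observable_transpose_expansion[OF A l2_row[OF \<psi>]])
  also have "\<dots> = infsum (\<lambda>k. infsum (\<lambda>m. u m * \<psi> (m, k)) I * v k) I"
    by (rule infsum_bilinear_swap[OF u v \<psi>])
  also have "\<dots> = infsum (\<lambda>k. tensor_left I A \<psi> (i, k) * v k) I"
    unfolding tensor_left_apply[OF \<psi>] u_def by (simp add: observable_matrix_expansion[OF A l2_col[OF \<psi>]])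
  also have "\<dots> = tensor_right I A (tensor_left I A \<psi>) x"
    unfolding tensor_right_apply[OF L\<psi>] x v_def
    by (simp add: observable_transpose_expansion[OF A l2_row[OF L\<psi>]])
  finally show "tensor_left I A (tensor_right I A \<psi>) x = tensor_right I A (tensor_left I A \<psi>) x" .
qed

lemma commuting_quadratic_difference_cube:
  assumes L: "is_bop V L" and R: "is_bop V R"
    and LL: "\<And>\<phi>. \<phi> \<in> l2 V \<Longrightarrow> L (L \<phi>) = (\<lambda>x. s * L \<phi> x - q * \<phi> x)"
    and RR: "\<And>\<phi>. \<phi> \<in> l2 V \<Longrightarrow> R (R \<phi>) = (\<lambda>x. s * R \<phi> x - q * \<phi> x)"
    and LR: "\<And>\<phi>. \<phi> \<in> l2 V \<Longrightarrow> L (R \<phi>) = R (L \<phi>)"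
    and \<phi>: "\<phi> \<in> l2 V"
  defines "D \<equiv> \<lambda>\<psi> x. L \<psi> x - R \<psi> x"
  shows "D (D (D \<phi>)) = (\<lambda>x. (s^2 - 4 * q) * D \<phi> x)"
proof -
  have l: "L \<phi> \<in> l2 V" and r: "R \<phi> \<in> l2 V" by (simp_all add: bop_l2[OF L \<phi>] bop_l2[OF R \<phi>])
  have D_sq: "D (D g) = (\<lambda>x. s * (L g x + R g x) - 2 * q * g x - 2 * L (R g) x)" if g: "g \<in> l2 V" for g
    unfolding D_def
    using bop_diff[OF L bop_l2[OF L g] bop_l2[OF R g]] bop_diff[OF R bop_l2[OF L g] bop_l2[OF R g]]
      LL[OF g] RR[OF g] LR[OF g]
    by (simp add: fun_eq_iff algebra_simps)
  have d: "D \<phi> \<in> l2 V" unfolding D_def by (rule l2_diff[OF l r])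
  \<comment> \<open>on \<open>D \<phi>\<close>, \<open>L + R\<close> acts as \<open>s\<close> and \<open>L R\<close> as \<open>q\<close>\<close>
  have LRd: "L (R (D \<phi>)) = (\<lambda>x. q * D \<phi> x)"
  proof -
    have "R (D \<phi>) = (\<lambda>x. L (R \<phi>) x - (s * R \<phi> x - q * \<phi> x))"
      unfolding D_def using bop_diff[OF R l r] LR[OF \<phi>] RR[OF \<phi>] by simp
    moreover have "L (\<lambda>x. s * R \<phi> x - q * \<phi> x) = (\<lambda>x. s * L (R \<phi>) x - q * L \<phi> x)"
      using bop_diff[OF L l2_cmult[OF r, of s] l2_cmult[OF \<phi>, of q]] bop_cmult[OF L r, of s]
        bop_cmult[OF L \<phi>, of q]
      by simp
    ultimately have "L (R (D \<phi>)) = (\<lambda>x. L (L (R \<phi>)) x - (s * L (R \<phi>) x - q * L \<phi> x))"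
      using bop_diff[OF L bop_l2[OF L r] l2_diff[OF l2_cmult[OF r] l2_cmult[OF \<phi>]]] by simp
    then show ?thesis unfolding LL[OF r] D_def by (simp add: fun_eq_iff algebra_simps)
  qed
  have "(\<lambda>x. L (D \<phi>) x + R (D \<phi>) x) = (\<lambda>x. s * D \<phi> x)"
    unfolding D_def bop_diff[OF L l r] bop_diff[OF R l r] LL[OF \<phi>] RR[OF \<phi>] LR[OF \<phi>]
    by (simp add: algebra_simps)
  then show ?thesis
    unfolding D_sq[OF d] LRd by (simp add: fun_eq_iff algebra_simps power2_eq_square)
qed

lemma finite_card_le_2E:
  assumes "finite S" and "card S \<le> 2"
  obtains a b where "S \<subseteq> {a, b}"
proof -
  consider "card S = 0" | "card S = 1" | "card S = 2" using assms(2) by linarith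
  then show ?thesis
  proof cases
    case 1
    then show ?thesis using assms(1) that by simp
  next
    case 2
    then show ?thesis using that by (metis card_1_singletonE subset_insertI)
  next
    case 3
    then show ?thesis using that by (metis card_2_iff order_refl)
  qed
qed

lemma specR_Delta_subset:
  assumes A: "observable I A" and "finite (spectrum I A)" and "card (spectrum I A) \<le> 2"
  obtains c :: real where "specR (I \<times> I) (Delta I A) \<subseteq> {0, c, -c}"
proof -
  have Ab: "is_bop I A" by (rule observable_bop[OF A])
  obtain a b where ab: "spectrum I A \<subseteq> {a, b}" using finite_card_le_2E assms(2,3) by blast
  have quad: "A (A g) = (\<lambda>j. complex_of_real (Re a + Re b) * A g j - complex_of_real (Re a * Re b) * g j)"
    if "g \<in> l2 I" for g
    by (rule observable_quadratic_relation[OF A _ that]) (use ab in auto)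
  have D: "is_bop (I \<times> I) (Delta I A)"
    unfolding Delta_eq_tensor_diff[OF A] by (rule is_bop_minus[OF is_bop_tensor_left[OF Ab] is_bop_tensor_right[OF Ab]])
  have "Delta I A (Delta I A (Delta I A \<phi>))
      = (\<lambda>x. complex_of_real ((Re a - Re b)^2) * Delta I A \<phi> x)" if "\<phi> \<in> l2 (I \<times> I)" for \<phi>
  proof -
    have eq: "complex_of_real ((Re a - Re b)^2)
        = (complex_of_real (Re a + Re b))^2 - 4 * complex_of_real (Re a * Re b)"
      by (simp add: power2_eq_square algebra_simps)
    show ?thesis
      unfolding Delta_eq_tensor_diff[OF A] eq
    proof (rule commuting_quadratic_difference_cube[OF is_bop_tensor_left[OF Ab]
          is_bop_tensor_right[OF Ab] _ _ _ that])
      fix \<psi> assume \<psi>: "\<psi> \<in> l2 (I \<times> I)"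
      show "tensor_left I A (tensor_left I A \<psi>) = (\<lambda>x. complex_of_real (Re a + Re b) * tensor_left I A \<psi> x
          - complex_of_real (Re a * Re b) * \<psi> x)"
        by (rule tensor_left_square[OF Ab _ \<psi>]) (rule quad)
      show "tensor_right I A (tensor_right I A \<psi>) = (\<lambda>x. complex_of_real (Re a + Re b) * tensor_right I A \<psi> x
          - complex_of_real (Re a * Re b) * \<psi> x)"
        by (rule tensor_right_square[OF Ab _ \<psi>]) (rule quad)
      show "tensor_left I A (tensor_right I A \<psi>) = tensor_right I A (tensor_left I A \<psi>)"
        by (rule tensor_left_right_commute[OF A \<psi>])
    qed
  qed
  then show ?thesis using specR_subset_of_cubic[OF D] that by blast
qed

section \<open>Rescaling the functional calculus\<close>

lemma specR_scaleR:
  assumes "t \<noteq> 0"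
  shows "specR J (\<lambda>f j. complex_of_real t * X f j) = (\<lambda>x. t * x) ` specR J X"
  using assms unfolding specR_def by (simp add: spectrum_cmult image_image)

lemma sorted_list_of_set_strict_mono_image:
  fixes g :: "'a::linorder \<Rightarrow> 'b::linorder"
  assumes g: "strict_mono g"
  shows "sorted_list_of_set (g ` A) = map g (sorted_list_of_set A)"
proof (cases "finite A")
  case True
  have inj: "inj g" using g by (rule strict_mono_imp_inj_on)
  have "sorted_list_of_set (g ` A) = sort (remdups (map g (sorted_list_of_set A)))"
    using True by (simp flip: sorted_list_of_set_sort_remdups)
  also have "remdups (map g (sorted_list_of_set A)) = map g (sorted_list_of_set A)"
    by (rule distinct_remdups_id) (simp add: distinct_map inj_on_subset[OF inj])
  also have "sort (map g (sorted_list_of_set A)) = map g (sorted_list_of_set A)"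
    by (rule sorted_sort_id)
      (simp add: sorted_map sorted_wrt_mono_rel[OF _ sorted_sorted_list_of_set] strict_mono_less_eq[OF g])
  finally show ?thesis .
next
  case False
  then have "infinite (g ` A)" using finite_imageD[of g A] strict_mono_imp_inj_on[OF g] by blast
  then show ?thesis using False by simp
qed

lemma proj_factor_scaleR:
  assumes "t > 0"
  shows "proj_factor J (\<lambda>f j. complex_of_real t * X f j) (t * lam) (t * mu) = proj_factor J X lam mu"
proof -
  have "(complex_of_real t * a - complex_of_real (t * mu) * b) / complex_of_real (t * lam - t * mu)
      = (a - complex_of_real mu * b) / complex_of_real (lam - mu)" for a b
    using assms by (simp add: right_diff_distrib[symmetric] mult.assoc)
  then show ?thesis unfolding proj_factor_def by (intro ext) auto
qed

lemma spectral_proj_scaleR: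
  assumes t: "t > 0"
  shows "spectral_proj J (\<lambda>f j. complex_of_real t * X f j) (t * lam) = spectral_proj J X lam"
proof -
  have "specR J (\<lambda>f j. complex_of_real t * X f j) - {t * lam} = (\<lambda>x. t * x) ` (specR J X - {lam})"
    using t by (auto simp: specR_scaleR)
  moreover have "strict_mono (\<lambda>x::real. t * x)" using t by (simp add: strict_mono_def)
  ultimately have list: "sorted_list_of_set (specR J (\<lambda>f j. complex_of_real t * X f j) - {t * lam})
      = map (\<lambda>x. t * x) (sorted_list_of_set (specR J X - {lam}))"
    by (simp add: sorted_list_of_set_strict_mono_image)
  have factors: "(\<lambda>mu T. proj_factor J (\<lambda>f j. complex_of_real t * X f j) (t * lam) mu \<circ> T) \<circ> (\<lambda>x. t * x)
      = (\<lambda>mu T. proj_factor J X lam mu \<circ> T)"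
    by (intro ext) (simp add: proj_factor_scaleR[OF t])
  show ?thesis unfolding spectral_proj_def list foldr_map factors ..
qed

lemma fcalc_scaleR:
  assumes t: "t > 0"
  shows "fcalc J h (\<lambda>f j. complex_of_real t * X f j) = fcalc J (\<lambda>x. h (t * x)) X"
proof -
  have inj: "inj_on (\<lambda>x::real. t * x) A" for A using t by (simp add: inj_on_def)
  show ?thesis
    unfolding fcalc_def specR_scaleR[OF less_imp_neq[OF t, symmetric]]
    by (intro ext, subst sum.reindex[OF inj]) (simp add: spectral_proj_scaleR[OF t])
qed

lemma fcalc_cong: "(\<And>x. x \<in> specR J X \<Longrightarrow> h x = h' x) \<Longrightarrow> fcalc J h X = fcalc J h' X"
  unfolding fcalc_def by (intro ext sum.cong) auto

lemma Delta_cmult: "Delta I (\<lambda>f j. c * A f j) = (\<lambda>\<psi> x. c * Delta I A \<psi> x)"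
proof (intro ext)
  fix \<psi> :: "nat \<times> nat \<Rightarrow> complex" and x :: "nat \<times> nat"
  obtain i j where x: "x = (i, j)" by (cases x)
  have "infsum (\<lambda>k. \<psi> (i, k) * (c * A (basis_vec j) k)) I = c * infsum (\<lambda>k. \<psi> (i, k) * A (basis_vec j) k) I"
    by (subst infsum_cmult_right'[symmetric]) (simp add: mult.left_commute)
  then show "Delta I (\<lambda>f j. c * A f j) \<psi> x = c * Delta I A \<psi> x"
    unfolding Delta_def x by (simp add: right_diff_distrib)
qed

lemma abs_pow_Delta_rescale:
  assumes "p' > 0"
    and A: "observable I A" and fin: "finite (spectrum I A)" and card: "card (spectrum I A) \<le> 2"
  obtains A' where "observable I A'" and "finite (spectrum I A')" and "card (spectrum I A') \<le> 2"
    and "abs_pow (I \<times> I) p' (Delta I A') = abs_pow (I \<times> I) p (Delta I A)"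
proof -
  obtain c :: real where c: "specR (I \<times> I) (Delta I A) \<subseteq> {0, c, -c}"
    using specR_Delta_subset[OF A fin card] by blast
  define t where "t = (if c = 0 then 1 else \<bar>c\<bar> powr (p / p') / \<bar>c\<bar>)"
  have "t > 0" by (simp add: t_def)
  define A' where "A' = (\<lambda>f j. complex_of_real t * A f j)"
  have spec: "spectrum I A' = (\<lambda>z. complex_of_real t * z) ` spectrum I A"
    unfolding A'_def using \<open>t > 0\<close> by (simp add: spectrum_cmult)
  have "\<bar>t * x\<bar> powr p' = \<bar>x\<bar> powr p" if "x \<in> specR (I \<times> I) (Delta I A)" for x
  proof -
    have "x = 0 \<or> (c \<noteq> 0 \<and> \<bar>x\<bar> = \<bar>c\<bar>)" using c that by auto
    moreover have "\<bar>t * c\<bar> powr p' = \<bar>c\<bar> powr p" if "c \<noteq> 0"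
      using that \<open>p' > 0\<close> by (simp add: t_def abs_mult powr_powr)
    ultimately show ?thesis by (auto simp: abs_mult)
  qed
  then have "abs_pow (I \<times> I) p' (Delta I A') = abs_pow (I \<times> I) p (Delta I A)"
    unfolding abs_pow_def A'_def Delta_cmult fcalc_scaleR[OF \<open>t > 0\<close>] by (rule fcalc_cong)
  moreover have "observable I A'" unfolding A'_def by (rule observable_scaleR[OF A])
  moreover have "finite (spectrum I A')" unfolding spec using fin by simp
  moreover have "card (spectrum I A') \<le> 2" unfolding spec by (rule order_trans[OF card_image_le[OF fin] card])
  ultimately show ?thesis using that by blast
qed

lemma Cclass_2_subset:
  assumes "p' > 0"
  shows "Cclass I 2 p \<subseteq> Cclass I 2 p'"
proof
  fix X assume "X \<in> Cclass I 2 p"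
  then obtain As where X: "X = Cop I As p"
    and As: "\<forall>A\<in>set As. observable I A \<and> finite (spectrum I A) \<and> card (spectrum I A) \<le> 2"
    unfolding Cclass_def by blast
  have "\<forall>A\<in>set As. \<exists>A'. (observable I A' \<and> finite (spectrum I A') \<and> card (spectrum I A') \<le> 2) \<and>
      abs_pow (I \<times> I) p' (Delta I A') = abs_pow (I \<times> I) p (Delta I A)"
    using As abs_pow_Delta_rescale[OF assms] by metis
  then obtain g where g: "\<forall>A\<in>set As. (observable I (g A) \<and> finite (spectrum I (g A)) \<and>
      card (spectrum I (g A)) \<le> 2) \<and> abs_pow (I \<times> I) p' (Delta I (g A)) = abs_pow (I \<times> I) p (Delta I A)"
    by metis
  have "Cop I (map g As) p' = Cop I As p"
    unfolding Cop_def using g by (simp cong: map_cong)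
  then show "X \<in> Cclass I 2 p'"
    unfolding Cclass_def X using g by (auto intro!: exI[of _ "map g As"])
qed

theorem proposition4p2:
  fixes p p' :: real and I :: "nat set"
  assumes "p > 0" and "p' > 0"
  shows "Cclass I 2 p = Cclass I 2 p'"
  using Cclass_2_subset[OF assms(1)] Cclass_2_subset[OF assms(2)] by blast

end
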